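(* Let $n\ge2$, let $\phi$ be an automorphism of ${\mathfrak{A}}_n$, and let $Z = (z_1,z_2,\dots)\in{\mathbb{B}}_n^\infty$ be such that $\{z_i\}\cap\{\hat\phi(z_i)\} = \varnothing$. If $\rho$ is a $k\times k$ nest representation of ${\mathfrak{A}}_n\times_\phi{\mathbb{Z}}^+$ in ${\mathcal{N}}_{Z,k}$, then $\rho(U) = 0$.
   Context: ${\mathfrak{A}}_n$ is the non-commutative disc algebra generated by the left creation operators $S_1,\dots,S_n$ on full Fock space; automorphisms are isometric. ${\mathfrak{A}}_n\times_\phi{\mathbb{Z}}^+$ is the universal operator algebra generated by ${\mathfrak{A}}_n$ and a contraction $U$ with $AU=U\phi(A)$ for $A\in{\mathfrak{A}}_n$. For $z$ in the closed unit ball $\overline{{\mathbb{B}}}_n$ of ${\mathbb{C}}^n$, $\theta_z$ denotes the character of ${\mathfrak{A}}_n$ with $\theta_z(S_i)=z_i$, and $\hat\phi:\overline{{\mathbb{B}}}_n\to\overline{{\mathbb{B}}}_n$ is defined by $\theta_{\hat\phi(z)} = \theta_z\circ\phi$. For $z\in{\mathbb{B}}_n$, $\theta_{z,0}$ denotes the character of ${\mathfrak{A}}_n\times_\phi{\mathbb{Z}}^+$ extending $\theta_z$ with $\theta_{z,0}(U)=0$. Let ${\mathfrak{T}}_k$ be the algebra of upper triangular $k\times k$ matrices with respect to the standard basis $\xi_1,\dots,\xi_k$ of ${\mathbb{C}}^k$. A $k\times k$ nest representation is a representation $\pi$ (algebra homomorphism) of ${\mathfrak{A}}_n\times_\phi{\mathbb{Z}}^+$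 onto ${\mathfrak{T}}_k$; its diagonal characters are $\theta_{\pi,i}(A) = \langle\pi(A)\xi_i,\xi_i\rangle$, $1\le i\le k$. For a sequence $Z=(z_1,z_2,\dots)$ of points of ${\mathbb{B}}_n$ with at least $k$ entries, ${\mathcal{N}}_{Z,k}$ is the set of $k\times k$ nest representations $\pi$ with $\theta_{\pi,i} = \theta_{z_i,0}$ for $1\le i\le k$. *)

theory Defs
  imports Complex_Main "HOL-Library.Function_Algebras"
begin

text \<open>Full Fock space over C^n: vectors are functions on words (lists of letters
  0..n-1, the letter i standing for the generator e_{i+1}) with square-summable
  coefficients.  Operators are functions on such vectors, normalised to be 0 on
  vectors outside the Fock space.\<close>

type_synonym fvec = "nat list \<Rightarrow> complex"
type_synonym fop = "fvec \<Rightarrow> fvec"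

definition words :: "nat \<Rightarrow> nat list set" where
  "words n = {w. set w \<subseteq> {..<n}}"

definition sqsums :: "fvec \<Rightarrow> real set" where
  "sqsums f = (\<lambda>F. \<Sum>w\<in>F. (cmod (f w))^2) ` {F. finite F}"

definition fock :: "nat \<Rightarrow> fvec set" where
  "fock n = {f. (\<forall>w. w \<notin> words n \<longrightarrow> f w = 0) \<and> bdd_above (sqsums f)}"

definition fnorm :: "fvec \<Rightarrow> real" where
  "fnorm f = sqrt (Sup (sqsums f))"

definition bop :: "nat \<Rightarrow> fop \<Rightarrow> bool" where
  "bop n T \<longleftrightarrow> T ` fock n \<subseteq> fock n \<and> (\<forall>f. f \<notin> fock n \<longrightarrow> T f = 0)
     \<and> (\<forall>f\<in>fock n. \<forall>g\<in>fock n. \<forall>a b::complex.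
          T (\<lambda>w. a * f w + b * g w) = (\<lambda>w. a * T f w + b * T g w))
     \<and> (\<exists>C. \<forall>f\<in>fock n. fnorm (T f) \<le> C * fnorm f)"

definition opnorm :: "nat \<Rightarrow> fop \<Rightarrow> real" where
  "opnorm n T = Sup ((\<lambda>f. fnorm (T f)) ` {f\<in>fock n. fnorm f \<le> 1})"

definition IdF :: "nat \<Rightarrow> fop" where
  "IdF n f = (if f \<in> fock n then f else 0)"

text \<open>Left creation operator S_{i+1}: xi_w \<mapsto> xi_{(i+1) w}.\<close>
definition Sop :: "nat \<Rightarrow> nat \<Rightarrow> fop" where
  "Sop n i f = (if f \<in> fock n then
      (\<lambda>w. case w of [] \<Rightarrow> 0 | j # v \<Rightarrow> (if j = i then f v else 0)) else 0)"

definition Sword :: "nat \<Rightarrow> nat list \<Rightarrow> fop" where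
  "Sword n w = foldr (\<lambda>i T. Sop n i \<circ> T) w (IdF n)"

definition poly_ops :: "nat \<Rightarrow> fop set" where
  "poly_ops n = {T. \<exists>F c. finite F \<and> F \<subseteq> words n \<and>
      T = (\<lambda>f. \<lambda>x. \<Sum>w\<in>F. c w * Sword n w f x)}"

definition discalg :: "nat \<Rightarrow> fop set" where
  "discalg n = {T. bop n T \<and>
      (\<forall>e>0. \<exists>p\<in>poly_ops n. opnorm n (\<lambda>f. T f - p f) < e)}"

definition lincomb :: "complex \<Rightarrow> fop \<Rightarrow> complex \<Rightarrow> fop \<Rightarrow> fop" where
  "lincomb a A b B = (\<lambda>f. \<lambda>x. a * A f x + b * B f x)"

definition is_aut :: "nat \<Rightarrow> (fop \<Rightarrow> fop) \<Rightarrow> bool" where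
  "is_aut n \<phi> \<longleftrightarrow> bij_betw \<phi> (discalg n) (discalg n) \<and>
     (\<forall>A\<in>discalg n. \<forall>B\<in>discalg n. \<phi> (A \<circ> B) = \<phi> A \<circ> \<phi> B \<and>
        (\<forall>a b. \<phi> (lincomb a A b B) = lincomb a (\<phi> A) b (\<phi> B)))"

definition is_char :: "nat \<Rightarrow> (fop \<Rightarrow> complex) \<Rightarrow> bool" where
  "is_char n \<chi> \<longleftrightarrow> \<chi> (IdF n) = 1 \<and> (\<forall>A. A \<notin> discalg n \<longrightarrow> \<chi> A = 0) \<and>
     (\<forall>A\<in>discalg n. \<forall>B\<in>discalg n. \<chi> (A \<circ> B) = \<chi> A * \<chi> B \<and>
        (\<forall>a b. \<chi> (lincomb a A b B) = a * \<chi> A + b * \<chi> B))"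

text \<open>Points of C^n are functions nat => complex vanishing from index n on
  (coordinate i stands for z_{i+1}).\<close>
definition ballN :: "nat \<Rightarrow> (nat \<Rightarrow> complex) set" where
  "ballN n = {z. (\<forall>i\<ge>n. z i = 0) \<and> (\<Sum>i<n. (cmod (z i))^2) < 1}"

definition cballN :: "nat \<Rightarrow> (nat \<Rightarrow> complex) set" where
  "cballN n = {z. (\<forall>i\<ge>n. z i = 0) \<and> (\<Sum>i<n. (cmod (z i))^2) \<le> 1}"

definition theta :: "nat \<Rightarrow> (nat \<Rightarrow> complex) \<Rightarrow> fop \<Rightarrow> complex" where
  "theta n z = (THE \<chi>. is_char n \<chi> \<and> (\<forall>i<n. \<chi> (Sop n i) = z i))"

definition phihat :: "nat \<Rightarrow> (fop \<Rightarrow> fop) \<Rightarrow> (nat \<Rightarrow> complex) \<Rightarrow> (nat \<Rightarrow> complex)" where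
  "phihat n \<phi> z = (THE w. w \<in> cballN n \<and>
      theta n w = (\<lambda>A. if A \<in> discalg n then theta n z (\<phi> A) else 0))"

text \<open>The (algebraic) semicrossed product A_n x_phi Z^+: an element X stands for
  the finite sum  sum_m U^m X(m)  with X(m) in A_n; the covariance relation
  A U = U phi(A) gives (U^a A)(U^b B) = U^(a+b) phi^b(A) B.\<close>
definition cp :: "nat \<Rightarrow> (nat \<Rightarrow> fop) set" where
  "cp n = {X. (\<forall>m. X m \<in> discalg n) \<and> finite {m. X m \<noteq> 0}}"

definition cpmult :: "(fop \<Rightarrow> fop) \<Rightarrow> (nat \<Rightarrow> fop) \<Rightarrow> (nat \<Rightarrow> fop) \<Rightarrow> (nat \<Rightarrow> fop)" where
  "cpmult \<phi> X Y = (\<lambda>m. \<Sum>b\<le>m. (\<phi> ^^ b) (X (m - b)) \<circ> Y b)"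

definition cpscale :: "complex \<Rightarrow> (nat \<Rightarrow> fop) \<Rightarrow> (nat \<Rightarrow> fop)" where
  "cpscale c X = (\<lambda>m f x. c * X m f x)"

definition cpU :: "nat \<Rightarrow> (nat \<Rightarrow> fop)" where
  "cpU n = (\<lambda>m. if m = 1 then IdF n else 0)"

text \<open>k x k matrices as functions on indices 0..k-1 (index i stands for xi_{i+1}).\<close>
type_synonym cmat = "nat \<Rightarrow> nat \<Rightarrow> complex"

definition mmult :: "nat \<Rightarrow> cmat \<Rightarrow> cmat \<Rightarrow> cmat" where
  "mmult k M N = (\<lambda>i j. \<Sum>l<k. M i l * N l j)"

definition uptri :: "nat \<Rightarrow> cmat set" where
  "uptri k = {M. \<forall>i j. (k \<le> i \<or> k \<le> j \<or> j < i) \<longrightarrow> M i j = 0}"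

definition nest_rep :: "nat \<Rightarrow> (fop \<Rightarrow> fop) \<Rightarrow> nat \<Rightarrow> ((nat \<Rightarrow> fop) \<Rightarrow> cmat) \<Rightarrow> bool" where
  "nest_rep n \<phi> k \<rho> \<longleftrightarrow>
     (\<forall>X\<in>cp n. \<forall>Y\<in>cp n. \<rho> (X + Y) = \<rho> X + \<rho> Y \<and>
        \<rho> (cpmult \<phi> X Y) = mmult k (\<rho> X) (\<rho> Y)) \<and>
     (\<forall>X\<in>cp n. \<forall>c. \<rho> (cpscale c X) = (\<lambda>i j. c * \<rho> X i j)) \<and>
     \<rho> ` cp n = uptri k"

definition theta0 :: "nat \<Rightarrow> (nat \<Rightarrow> complex) \<Rightarrow> (nat \<Rightarrow> fop) \<Rightarrow> complex" where
  "theta0 n z X = theta n z (X 0)"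

text \<open>N_{Z,k}; Z is 0-indexed (Z i stands for z_{i+1}).\<close>
definition NZk :: "nat \<Rightarrow> (fop \<Rightarrow> fop) \<Rightarrow> (nat \<Rightarrow> nat \<Rightarrow> complex) \<Rightarrow> nat
    \<Rightarrow> ((nat \<Rightarrow> fop) \<Rightarrow> cmat) set" where
  "NZk n \<phi> Z k = {\<rho>. nest_rep n \<phi> k \<rho> \<and>
      (\<forall>i<k. \<forall>X\<in>cp n. \<rho> X i i = theta0 n (Z i) X)}"

end

theory Submission
  imports Defs "HOL-Analysis.L2_Norm"
begin

text \<open>The diagonal of rho(U) is theta_{z_i,0}(U) = 0, so rho(U) is strictly upper triangular,
  and the covariance relation A U = U phi(A) gives rho(A) rho(U) = rho(U) rho(phi(A)).
  At a nonzero entry (i,j) of rho(U) nearest to the diagonal this reads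
  theta_{z_i}(A) = theta_{z_j}(phi(A)) for all A, i.e. z_i = phihat(z_j), which the hypothesis
  on Z forbids.

  Most of the work lies in making theta_z and phihat, which are definite descriptions,
  meaningful: for every z in the closed ball there is exactly one character sending S_i to z_i.
  Existence is the inequality |p(z)| \<le> ||p(S)|| for polynomials p, obtained by pairing p(S)
  with the truncated kernel vectors \<Sum>_{|w| \<le> N} conj(z^w) xi_w and letting N tend to infinity.
  Uniqueness holds because every character is contractive: I - B is invertible (by the Neumann
  series) whenever ||B|| < 1, so no character takes the value 1 at such a B.\<close>

section \<open>Square-summable functions on words\<close>

abbreviation l2 :: "nat list set \<Rightarrow> fvec \<Rightarrow> real" where
  "l2 F f \<equiv> L2_set (\<lambda>x. cmod (f x)) F"

lemma sqsums_mem: "finite F \<Longrightarrow> (\<Sum>w\<in>F. (cmod (f w))^2) \<in> sqsums f"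
  unfolding sqsums_def by auto

lemma sqsums_ne: "sqsums f \<noteq> {}"
  using sqsums_mem[of "{}" f] by auto

lemma fnorm_nonneg: "bdd_above (sqsums f) \<Longrightarrow> 0 \<le> fnorm f"
  unfolding fnorm_def using sqsums_mem[of "{}" f]
  by (metis cSup_upper finite.emptyI real_sqrt_ge_zero sum.empty)

lemma l2_le_fnorm: assumes "bdd_above (sqsums f)" "finite F" shows "l2 F f \<le> fnorm f"
proof -
  have "(\<Sum>w\<in>F. (cmod (f w))^2) \<le> Sup (sqsums f)"
    using cSup_upper[OF sqsums_mem[OF assms(2)] assms(1)] .
  thus ?thesis unfolding fnorm_def L2_set_def by simp
qed

lemma fnorm_leI:
  assumes "\<And>F. finite F \<Longrightarrow> l2 F f \<le> C"
  shows "bdd_above (sqsums f)" "fnorm f \<le> C"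
proof -
  have C0: "0 \<le> C" using assms[of "{}"] by simp
  have le: "s \<le> C^2" if "s \<in> sqsums f" for s
  proof -
    from that obtain F where F: "finite F" "s = (\<Sum>w\<in>F. (cmod (f w))^2)"
      unfolding sqsums_def by auto
    have "sqrt s \<le> C" using assms[OF F(1)] F(2) unfolding L2_set_def by simp
    moreover have "0 \<le> s" using F(2) by (simp add: sum_nonneg)
    ultimately show ?thesis using C0 by (metis real_sqrt_le_iff real_sqrt_pow2 power2_le_imp_le abs_of_nonneg real_sqrt_abs real_sqrt_le_mono sqrt_le_D)
  qed
  show "bdd_above (sqsums f)" by (rule bdd_aboveI[where M="C^2"]) (rule le)
  have "Sup (sqsums f) \<le> C^2" using le sqsums_ne by (intro cSup_least) auto
  thus "fnorm f \<le> C" unfolding fnorm_def using C0 real_sqrt_le_mono[of "Sup (sqsums f)" "C^2"] by simp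
qed

lemma fock_bdd: "f \<in> fock n \<Longrightarrow> bdd_above (sqsums f)"
  unfolding fock_def by auto

lemma fock_vanish: "f \<in> fock n \<Longrightarrow> w \<notin> words n \<Longrightarrow> f w = 0"
  unfolding fock_def by auto

lemma cmod_le_fnorm: assumes "bdd_above (sqsums f)" shows "cmod (f x) \<le> fnorm f"
  using l2_le_fnorm[OF assms, of "{x}"] by simp

lemma fnorm_eq0: assumes "bdd_above (sqsums f)" "fnorm f = 0" shows "f = 0"
  using cmod_le_fnorm[OF assms(1)] assms(2) by (auto intro!: ext)

lemma L2_set_zero[simp]: "L2_set (\<lambda>x. 0) F = 0"
  by (simp add: L2_set_0')

lemma fnorm_0[simp]: "fnorm (\<lambda>x. 0) = 0"
proof -
  have "fnorm (\<lambda>x. 0) \<le> 0" by (rule fnorm_leI) simp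
  moreover have "bdd_above (sqsums (\<lambda>x. 0::complex))" by (rule fnorm_leI[where C=0]) simp
  ultimately show ?thesis using fnorm_nonneg by (metis order.antisym)
qed

lemma zero_fock[simp]: "(\<lambda>x. 0) \<in> fock n"
  unfolding fock_def using fnorm_leI(1)[where f="\<lambda>x. 0" and C=0] by simp

lemma zero_fock'[simp]: "0 \<in> fock n"
  using zero_fock by (simp add: zero_fun_def)

lemma l2_lin: "l2 F (\<lambda>x. a * f x + b * g x) \<le> cmod a * l2 F f + cmod b * l2 F g"
proof -
  have "l2 F (\<lambda>x. a * f x + b * g x) \<le> L2_set (\<lambda>x. cmod a * cmod (f x) + cmod b * cmod (g x)) F"
    by (rule L2_set_mono) (auto simp: norm_mult[symmetric] intro: norm_triangle_ineq order_trans)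
  also have "\<dots> \<le> L2_set (\<lambda>x. cmod a * cmod (f x)) F + L2_set (\<lambda>x. cmod b * cmod (g x)) F"
    by (rule L2_set_triangle_ineq)
  also have "\<dots> = cmod a * l2 F f + cmod b * l2 F g"
    by (simp add: L2_set_right_distrib)
  finally show ?thesis .
qed

lemma fock_lin:
  assumes "f \<in> fock n" "g \<in> fock n"
  shows "(\<lambda>x. a * f x + b * g x) \<in> fock n"
    "fnorm (\<lambda>x. a * f x + b * g x) \<le> cmod a * fnorm f + cmod b * fnorm g"
proof -
  have *: "l2 F (\<lambda>x. a * f x + b * g x) \<le> cmod a * fnorm f + cmod b * fnorm g" if "finite F" for F
    using l2_lin[where F=F and a=a and f=f and b=b and g=g] l2_le_fnorm[OF fock_bdd[OF assms(1)] that] l2_le_fnorm[OF fock_bdd[OF assms(2)] that]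
    by (meson add_mono dual_order.trans mult_left_mono norm_ge_zero)
  show "(\<lambda>x. a * f x + b * g x) \<in> fock n"
    using fnorm_leI(1)[OF *] assms unfolding fock_def by auto
  show "fnorm (\<lambda>x. a * f x + b * g x) \<le> cmod a * fnorm f + cmod b * fnorm g"
    using fnorm_leI(2)[OF *] .
qed

lemma fock_scale: assumes "f \<in> fock n" shows "(\<lambda>x. a * f x) \<in> fock n"
  using fock_lin(1)[OF assms assms, where a=a and b=0] by simp

lemma fnorm_scale: assumes "f \<in> fock n" shows "fnorm (\<lambda>x. a * f x) = cmod a * fnorm f"
proof (cases "a = 0")
  case True thus ?thesis by simp
next
  case False
  have le1: "fnorm (\<lambda>x. a * f x) \<le> cmod a * fnorm f"
    using fock_lin(2)[OF assms assms, where a=a and b=0] by simp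
  have "(\<lambda>x. inverse a * (a * f x)) = f" using False by (simp add: field_simps)
  hence "fnorm f = fnorm (\<lambda>x. inverse a * (a * f x))" by simp
  also have "\<dots> \<le> cmod (inverse a) * fnorm (\<lambda>x. a * f x)"
    using fock_lin(2)[OF fock_scale[OF assms] fock_scale[OF assms], where a="inverse a" and b=0] by simp
  finally have fin: "fnorm f \<le> cmod (inverse a) * fnorm (\<lambda>x. a * f x)" .
  have "cmod a * fnorm f \<le> fnorm (\<lambda>x. a * f x)"
  proof -
    have "fnorm f \<le> fnorm (\<lambda>x. a * f x) / cmod a" using fin by (simp add: norm_inverse divide_inverse mult.commute)
    thus ?thesis using False by (simp add: pos_le_divide_eq mult.commute)
  qed
  with le1 show ?thesis by simp
qed

section \<open>Bounded operators on the Fock space\<close>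

lemma bop_fock: "bop n T \<Longrightarrow> f \<in> fock n \<Longrightarrow> T f \<in> fock n"
  unfolding bop_def by auto
lemma bop_out: "bop n T \<Longrightarrow> f \<notin> fock n \<Longrightarrow> T f = 0"
  unfolding bop_def by auto
lemma bop_lin: "bop n T \<Longrightarrow> f \<in> fock n \<Longrightarrow> g \<in> fock n \<Longrightarrow>
   T (\<lambda>w. a * f w + b * g w) = (\<lambda>w. a * T f w + b * T g w)"
  unfolding bop_def by auto
lemma bop_bound: "bop n T \<Longrightarrow> \<exists>C. \<forall>f\<in>fock n. fnorm (T f) \<le> C * fnorm f"
  unfolding bop_def by auto

lemma bop_zero: assumes "bop n T" shows "T (\<lambda>x. 0) = (\<lambda>x. 0)"
  using bop_lin[OF assms zero_fock zero_fock, where a=0 and b=0] by simp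

lemma bop_zero': assumes "bop n T" shows "T 0 = 0"
  using bop_zero[OF assms] by (simp add: zero_fun_def)

lemma bop_scale: assumes "bop n T" "f \<in> fock n" shows "T (\<lambda>x. a * f x) = (\<lambda>x. a * T f x)"
  using bop_lin[OF assms assms(2), where a=a and b=0] by simp

lemma opnorm_bdd: assumes "bop n T"
  shows "bdd_above ((\<lambda>f. fnorm (T f)) ` {f\<in>fock n. fnorm f \<le> 1})"
proof -
  obtain C where C: "\<forall>f\<in>fock n. fnorm (T f) \<le> C * fnorm f" using bop_bound[OF assms] by auto
  have "fnorm (T f) \<le> max C 0" if "f \<in> fock n" "fnorm f \<le> 1" for f
  proof -
    have "C * fnorm f \<le> max C 0" using that fnorm_nonneg[OF fock_bdd[OF that(1)]]
      by (cases "C \<ge> 0") (auto simp: mult_left_le mult_nonpos_nonneg intro: order_trans)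
    thus ?thesis using C that by (meson order_trans)
  qed
  thus ?thesis by (intro bdd_aboveI[where M="max C 0"]) auto
qed

lemma opnorm_upper: assumes "bop n T" "f \<in> fock n" "fnorm f \<le> 1" shows "fnorm (T f) \<le> opnorm n T"
  unfolding opnorm_def using assms opnorm_bdd[OF assms(1)] by (auto intro!: cSup_upper)

lemma opnorm_nonneg: assumes "bop n T" shows "0 \<le> opnorm n T"
  using opnorm_upper[OF assms zero_fock] bop_zero[OF assms] by simp

lemma opnorm_le: assumes "bop n T" "f \<in> fock n" shows "fnorm (T f) \<le> opnorm n T * fnorm f"
proof (cases "fnorm f = 0")
  case True
  hence "f = (\<lambda>x. 0)" using fnorm_eq0[OF fock_bdd[OF assms(2)]] by (simp add: zero_fun_def)
  thus ?thesis using bop_zero[OF assms(1)] True by simp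
next
  case False
  have fn0: "0 < fnorm f" using False fnorm_nonneg[OF fock_bdd[OF assms(2)]] by simp
  let ?g = "\<lambda>x. complex_of_real (1 / fnorm f) * f x"
  have g: "?g \<in> fock n" using fock_scale[OF assms(2)] .
  have "fnorm ?g = cmod (complex_of_real (1 / fnorm f)) * fnorm f" by (rule fnorm_scale[OF assms(2)])
  moreover have "cmod (complex_of_real (1 / fnorm f)) = 1 / fnorm f" using fn0 by (simp add: norm_divide)
  ultimately have "fnorm ?g = 1" using fn0 by simp
  hence "fnorm (T ?g) \<le> opnorm n T" using opnorm_upper[OF assms(1) g] by simp
  moreover have "T ?g = (\<lambda>x. complex_of_real (1 / fnorm f) * T f x)" by (rule bop_scale[OF assms])
  moreover have "fnorm (\<lambda>x. complex_of_real (1 / fnorm f) * T f x) = cmod (complex_of_real (1 / fnorm f)) * fnorm (T f)"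
    by (rule fnorm_scale[OF bop_fock[OF assms]])
  moreover have "cmod (complex_of_real (1 / fnorm f)) = 1 / fnorm f" using fn0 by (simp add: norm_divide)
  ultimately show ?thesis using fn0 by (simp add: pos_divide_le_eq)
qed

lemma opnorm_leI: assumes "\<And>f. f \<in> fock n \<Longrightarrow> fnorm (T f) \<le> M * fnorm f" "0 \<le> M"
  shows "opnorm n T \<le> M"
  unfolding opnorm_def
proof (rule cSup_least)
  have "(\<lambda>x. 0) \<in> {f \<in> fock n. fnorm f \<le> 1}" by simp
  thus "(\<lambda>f. fnorm (T f)) ` {f \<in> fock n. fnorm f \<le> 1} \<noteq> {}" by blast
  fix x assume "x \<in> (\<lambda>f. fnorm (T f)) ` {f \<in> fock n. fnorm f \<le> 1}"
  then obtain f where f: "f \<in> fock n" "fnorm f \<le> 1" "x = fnorm (T f)" by auto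
  have "M * fnorm f \<le> M" using f(2) assms(2) by (simp add: mult_left_le)
  thus "x \<le> M" using assms(1)[OF f(1)] f(3) by simp
qed

lemma lincomb_app: "lincomb a A b B f = (\<lambda>x. a * A f x + b * B f x)"
  unfolding lincomb_def by simp

lemma fnorm_lincomb_le:
  assumes "bop n A" "bop n B" "f \<in> fock n"
  shows "fnorm (lincomb a A b B f) \<le> (cmod a * opnorm n A + cmod b * opnorm n B) * fnorm f"
proof -
  have "fnorm (lincomb a A b B f) \<le> cmod a * fnorm (A f) + cmod b * fnorm (B f)"
    using fock_lin(2)[OF bop_fock[OF assms(1,3)] bop_fock[OF assms(2,3)]] by (simp add: lincomb_app)
  also have "\<dots> \<le> cmod a * (opnorm n A * fnorm f) + cmod b * (opnorm n B * fnorm f)"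
    by (intro add_mono mult_left_mono opnorm_le assms) auto
  finally show ?thesis by (simp add: algebra_simps)
qed

lemma fnorm_comp_le:
  assumes "bop n A" "bop n B" "f \<in> fock n"
  shows "fnorm ((A \<circ> B) f) \<le> (opnorm n A * opnorm n B) * fnorm f"
proof -
  have "fnorm ((A \<circ> B) f) \<le> opnorm n A * fnorm (B f)"
    using opnorm_le[OF assms(1) bop_fock[OF assms(2,3)]] by simp
  also have "\<dots> \<le> opnorm n A * (opnorm n B * fnorm f)"
    by (intro mult_left_mono opnorm_le assms opnorm_nonneg)
  finally show ?thesis by (simp add: algebra_simps)
qed

lemma bop_lincomb: assumes "bop n A" "bop n B" shows "bop n (lincomb a A b B)"
  unfolding bop_def
proof (intro conjI ballI allI impI)
  show "lincomb a A b B ` fock n \<subseteq> fock n"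
    using fock_lin(1)[OF bop_fock[OF assms(1)] bop_fock[OF assms(2)]] by (auto simp: lincomb_app)
  show "lincomb a A b B f = 0" if "f \<notin> fock n" for f
    using bop_out[OF assms(1) that] bop_out[OF assms(2) that] by (simp add: lincomb_app zero_fun_def)
  show "lincomb a A b B (\<lambda>w. c * f w + d * g w) = (\<lambda>w. c * lincomb a A b B f w + d * lincomb a A b B g w)"
    if "f \<in> fock n" "g \<in> fock n" for f g c d
    using bop_lin[OF assms(1) that] bop_lin[OF assms(2) that]
    by (simp add: lincomb_app algebra_simps)
  show "\<exists>C. \<forall>f\<in>fock n. fnorm (lincomb a A b B f) \<le> C * fnorm f"
    using fnorm_lincomb_le[OF assms] by blast
qed

lemma opnorm_lincomb: assumes "bop n A" "bop n B"
  shows "opnorm n (lincomb a A b B) \<le> cmod a * opnorm n A + cmod b * opnorm n B"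
  using fnorm_lincomb_le[OF assms] opnorm_nonneg[OF assms(1)] opnorm_nonneg[OF assms(2)]
  by (intro opnorm_leI) auto

lemma bop_comp: assumes "bop n A" "bop n B" shows "bop n (A \<circ> B)"
  unfolding bop_def
proof (intro conjI ballI allI impI)
  show "(A \<circ> B) ` fock n \<subseteq> fock n" using bop_fock assms by auto
  show "(A \<circ> B) f = 0" if "f \<notin> fock n" for f
    using bop_out[OF assms(2) that] bop_zero'[OF assms(1)] by simp
  show "(A \<circ> B) (\<lambda>w. c * f w + d * g w) = (\<lambda>w. c * (A \<circ> B) f w + d * (A \<circ> B) g w)"
    if "f \<in> fock n" "g \<in> fock n" for f g c d
    using bop_lin[OF assms(2) that] bop_lin[OF assms(1) bop_fock[OF assms(2) that(1)] bop_fock[OF assms(2) that(2)]]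
    by simp
  show "\<exists>C. \<forall>f\<in>fock n. fnorm ((A \<circ> B) f) \<le> C * fnorm f"
    using fnorm_comp_le[OF assms] by blast
qed

lemma opnorm_comp: assumes "bop n A" "bop n B" shows "opnorm n (A \<circ> B) \<le> opnorm n A * opnorm n B"
  using fnorm_comp_le[OF assms] opnorm_nonneg[OF assms(1)] opnorm_nonneg[OF assms(2)]
  by (intro opnorm_leI) auto

lemma opnorm_zero: "opnorm n (\<lambda>f. 0) = 0"
proof -
  have "bop n (\<lambda>f. 0)" unfolding bop_def zero_fun_def by (auto intro!: exI[of _ 0])
  moreover have "opnorm n (\<lambda>f. 0) \<le> 0" by (rule opnorm_leI) (auto simp: zero_fun_def)
  ultimately show ?thesis using opnorm_nonneg by (metis order.antisym)
qed

lemma diff_lincomb: "(\<lambda>f. T f - S f) = lincomb 1 T (-1) S"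
  unfolding lincomb_def by (auto simp: fun_diff_def)

section \<open>Creation operators and noncommutative polynomials\<close>

definition shiftw :: "nat list \<Rightarrow> fvec \<Rightarrow> fvec" where
  "shiftw u f = (\<lambda>x. if take (length u) x = u then f (drop (length u) x) else 0)"

lemma words_Cons: "i # u \<in> words n \<longleftrightarrow> i < n \<and> u \<in> words n"
  unfolding words_def by auto
lemma words_append: "u @ v \<in> words n \<longleftrightarrow> u \<in> words n \<and> v \<in> words n"
  unfolding words_def by auto
lemma words_Nil[simp]: "[] \<in> words n"
  unfolding words_def by auto

lemma sum_zero_outside:
  assumes "finite F" "\<And>x. x \<in> F \<Longrightarrow> x \<notin> P \<Longrightarrow> g x = 0"
  shows "(\<Sum>x\<in>F. g x) = (\<Sum>x\<in>F \<inter> P. g x)"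
  by (rule sum.mono_neutral_right) (use assms in auto)

lemma shiftw_fock:
  assumes u: "u \<in> words n" and f: "f \<in> fock n"
  shows "shiftw u f \<in> fock n" "fnorm (shiftw u f) \<le> fnorm f"
proof -
  let ?k = "length u"
  let ?P = "{x. take ?k x = u}"
  have inj: "inj_on (drop ?k) ?P"
    by (rule inj_onI) (metis append_take_drop_id mem_Collect_eq)
  have *: "l2 F (shiftw u f) \<le> fnorm f" if F: "finite F" for F
  proof -
    have "(\<Sum>x\<in>F. (cmod (shiftw u f x))^2) = (\<Sum>x\<in>F \<inter> ?P. (cmod (shiftw u f x))^2)"
      by (rule sum_zero_outside[OF F]) (simp add: shiftw_def)
    also have "\<dots> = (\<Sum>x\<in>F \<inter> ?P. (cmod (f (drop ?k x)))^2)"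
      by (rule sum.cong) (auto simp: shiftw_def)
    also have "\<dots> = (\<Sum>y\<in>drop ?k ` (F \<inter> ?P). (cmod (f y))^2)"
      by (rule sum.reindex[symmetric, unfolded comp_def]) (rule inj_on_subset[OF inj], auto)
    finally have "l2 F (shiftw u f) = l2 (drop ?k ` (F \<inter> ?P)) f" unfolding L2_set_def by simp
    also have "\<dots> \<le> fnorm f" by (rule l2_le_fnorm[OF fock_bdd[OF f]]) (use F in auto)
    finally show ?thesis .
  qed
  show "fnorm (shiftw u f) \<le> fnorm f" using fnorm_leI(2)[OF *] .
  have "shiftw u f w = 0" if "w \<notin> words n" for w
  proof (cases "take ?k w = u")
    case True
    hence "w = u @ drop ?k w" by (metis append_take_drop_id)
    hence "drop ?k w \<notin> words n" using that u words_append by metis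
    thus ?thesis using fock_vanish[OF f] by (simp add: shiftw_def)
  qed (simp add: shiftw_def)
  thus "shiftw u f \<in> fock n" using fnorm_leI(1)[OF *] unfolding fock_def by auto
qed

lemma shiftw_Nil[simp]: "shiftw [] f = f" unfolding shiftw_def by simp

lemma shiftw_append: "shiftw u (shiftw v f) = shiftw (u @ v) f"
proof (rule ext)
  fix x
  show "shiftw u (shiftw v f) x = shiftw (u @ v) f x"
  proof (cases "take (length u) x = u")
    case True
    then obtain y where x: "x = u @ y" by (metis append_take_drop_id)
    show ?thesis unfolding x shiftw_def by simp
  next
    case False
    have "take (length (u @ v)) x \<noteq> u @ v"
    proof
      assume "take (length (u @ v)) x = u @ v"
      hence "take (length u) (take (length (u @ v)) x) = u" by simp
      thus False using False by (simp add: min_def)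
    qed
    thus ?thesis using False by (simp add: shiftw_def)
  qed
qed

lemma shiftw_lin: "shiftw u (\<lambda>x. a * f x + b * g x) = (\<lambda>x. a * shiftw u f x + b * shiftw u g x)"
  unfolding shiftw_def by auto

lemma shiftw_sum: "shiftw u (\<lambda>y. \<Sum>v\<in>G. k v * h v y) = (\<lambda>x. \<Sum>v\<in>G. k v * shiftw u (h v) x)"
  unfolding shiftw_def by auto

lemma shiftw_zero[simp]: "shiftw u (\<lambda>x. 0) = (\<lambda>x. 0)" unfolding shiftw_def by auto

definition vacuum :: fvec where "vacuum = (\<lambda>x. if x = [] then 1 else 0)"

lemma shiftw_vacuum: "shiftw u vacuum = (\<lambda>x. if x = u then 1 else 0)"
  unfolding shiftw_def vacuum_def
  by (auto intro!: ext)

lemma vacuum_fock: "vacuum \<in> fock n"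
proof -
  have *: "l2 F vacuum \<le> 1" if "finite F" for F
  proof -
    have "(\<Sum>x\<in>F. (cmod (vacuum x))^2) = (\<Sum>x\<in>F \<inter> {[]}. (cmod (vacuum x))^2)"
      by (rule sum_zero_outside[OF that]) (auto simp: vacuum_def)
    also have "\<dots> \<le> 1" by (cases "[] \<in> F") (auto simp: vacuum_def Int_insert_right)
    finally show ?thesis unfolding L2_set_def by simp
  qed
  show ?thesis using fnorm_leI(1)[OF *] unfolding fock_def by (auto simp: vacuum_def)
qed

lemma Sop_fock_eq: "g \<in> fock n \<Longrightarrow> Sop n i g = shiftw [i] g"
  unfolding Sop_def shiftw_def by (auto intro!: ext split: list.split)

lemma Sop_zero: "Sop n i (\<lambda>x. 0) = (\<lambda>x. 0)"
  using Sop_fock_eq[OF zero_fock] by simp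

lemma Sword_Cons: "Sword n (i # u) = Sop n i \<circ> Sword n u"
  unfolding Sword_def by simp

lemma Sword_Nil: "Sword n [] = IdF n"
  unfolding Sword_def by simp

lemma Sword_eq: "u \<in> words n \<Longrightarrow> f \<in> fock n \<Longrightarrow> Sword n u f = shiftw u f"
proof (induction u)
  case Nil thus ?case by (simp add: Sword_Nil IdF_def)
next
  case (Cons i u)
  hence u: "u \<in> words n" using words_Cons by auto
  have "Sword n (i # u) f = Sop n i (shiftw u f)" using Cons u by (simp add: Sword_Cons)
  also have "\<dots> = shiftw [i] (shiftw u f)" by (rule Sop_fock_eq[OF shiftw_fock(1)[OF u Cons.prems(2)]])
  also have "\<dots> = shiftw (i # u) f" by (simp add: shiftw_append)
  finally show ?case .
qed

lemma Sword_out: "f \<notin> fock n \<Longrightarrow> Sword n u f = (\<lambda>x. 0)"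
proof (induction u)
  case Nil thus ?case by (simp add: Sword_Nil IdF_def zero_fun_def)
next
  case (Cons i u) thus ?case by (simp add: Sword_Cons Sop_zero)
qed

definition pol :: "nat \<Rightarrow> nat list set \<Rightarrow> (nat list \<Rightarrow> complex) \<Rightarrow> fop" where
  "pol n F c = (\<lambda>f x. \<Sum>w\<in>F. c w * Sword n w f x)"

lemma poly_ops_iff: "T \<in> poly_ops n \<longleftrightarrow> (\<exists>F c. finite F \<and> F \<subseteq> words n \<and> T = pol n F c)"
  unfolding poly_ops_def pol_def by auto

lemma pol_in: "finite F \<Longrightarrow> F \<subseteq> words n \<Longrightarrow> pol n F c \<in> poly_ops n"
  unfolding poly_ops_iff by auto

lemma pol_fock_eq: "F \<subseteq> words n \<Longrightarrow> f \<in> fock n \<Longrightarrow> pol n F c f = (\<lambda>x. \<Sum>w\<in>F. c w * shiftw w f x)"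
  unfolding pol_def by (auto intro!: ext sum.cong simp: Sword_eq)

lemma pol_out: "f \<notin> fock n \<Longrightarrow> pol n F c f = (\<lambda>x. 0)"
  unfolding pol_def by (simp add: Sword_out)

lemma fock_sum:
  assumes "finite F" "\<And>w. w \<in> F \<Longrightarrow> g w \<in> fock n"
  shows "(\<lambda>x. \<Sum>w\<in>F. c w * g w x) \<in> fock n \<and> fnorm (\<lambda>x. \<Sum>w\<in>F. c w * g w x) \<le> (\<Sum>w\<in>F. cmod (c w) * fnorm (g w))"
  using assms
proof (induction F rule: finite_induct)
  case empty thus ?case by simp
next
  case (insert a F)
  have IH: "(\<lambda>x. \<Sum>w\<in>F. c w * g w x) \<in> fock n" "fnorm (\<lambda>x. \<Sum>w\<in>F. c w * g w x) \<le> (\<Sum>w\<in>F. cmod (c w) * fnorm (g w))"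
    using insert by auto
  have ga: "g a \<in> fock n" using insert by auto
  have eq: "(\<lambda>x. \<Sum>w\<in>insert a F. c w * g w x) = (\<lambda>x. c a * g a x + 1 * (\<Sum>w\<in>F. c w * g w x))"
    using insert by simp
  show ?case unfolding eq
    using fock_lin[OF ga IH(1), where a="c a" and b=1] IH(2) insert by simp
qed

lemma bop_pol: assumes "F \<subseteq> words n" "finite F" shows "bop n (pol n F c)"
  unfolding bop_def
proof (intro conjI ballI allI impI)
  show "pol n F c ` fock n \<subseteq> fock n"
  proof
    fix g assume "g \<in> pol n F c ` fock n"
    then obtain f where f: "f \<in> fock n" "g = pol n F c f" by auto
    have "\<And>w. w \<in> F \<Longrightarrow> shiftw w f \<in> fock n" using shiftw_fock(1) assms(1) f(1) by auto
    from fock_sum[OF assms(2), where g="\<lambda>w. shiftw w f" and c=c, OF this]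
    show "g \<in> fock n" unfolding f(2) pol_fock_eq[OF assms(1) f(1)] by simp
  qed
  show "pol n F c f = 0" if "f \<notin> fock n" for f using pol_out[OF that] by (simp add: zero_fun_def)
  show "pol n F c (\<lambda>w. a * f w + b * g w) = (\<lambda>w. a * pol n F c f w + b * pol n F c g w)"
    if "f \<in> fock n" "g \<in> fock n" for f g a b
    using that fock_lin(1)[OF that] assms(1)
    by (simp add: pol_fock_eq shiftw_lin sum_distrib_left sum.distrib algebra_simps)
  show "\<exists>C. \<forall>f\<in>fock n. fnorm (pol n F c f) \<le> C * fnorm f"
  proof (intro exI ballI)
    fix f assume f: "f \<in> fock n"
    have "fnorm (pol n F c f) \<le> (\<Sum>w\<in>F. cmod (c w) * fnorm (shiftw w f))"
      unfolding pol_fock_eq[OF assms(1) f]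
    proof -
      have "\<And>w. w \<in> F \<Longrightarrow> shiftw w f \<in> fock n" using shiftw_fock(1) assms(1) f by auto
      from fock_sum[OF assms(2), where g="\<lambda>w. shiftw w f" and c=c, OF this]
      show "fnorm (\<lambda>x. \<Sum>w\<in>F. c w * shiftw w f x) \<le> (\<Sum>w\<in>F. cmod (c w) * fnorm (shiftw w f))" by simp
    qed
    also have "\<dots> \<le> (\<Sum>w\<in>F. cmod (c w) * fnorm f)"
      using assms(1) f by (intro sum_mono mult_left_mono shiftw_fock(2)) auto
    finally show "fnorm (pol n F c f) \<le> (\<Sum>w\<in>F. cmod (c w)) * fnorm f"
      by (simp add: sum_distrib_right)
  qed
qed

lemma bop_poly: "T \<in> poly_ops n \<Longrightarrow> bop n T"
  using bop_pol unfolding poly_ops_iff by auto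

definition zero_ext :: "nat list set \<Rightarrow> (nat list \<Rightarrow> complex) \<Rightarrow> nat list \<Rightarrow> complex" where
  "zero_ext F c x = (if x \<in> F then c x else 0)"

lemma sum_zero_ext: "finite G \<Longrightarrow> F \<subseteq> G \<Longrightarrow> (\<Sum>w\<in>G. zero_ext F c w * h w) = (\<Sum>w\<in>F. c w * h w)"
  unfolding zero_ext_def by (rule sum.mono_neutral_cong_right) auto

lemma pol_lincomb:
  assumes "finite F" "finite G"
  shows "lincomb a (pol n F c) b (pol n G d) = pol n (F \<union> G) (\<lambda>x. a * zero_ext F c x + b * zero_ext G d x)"
proof -
  have "(\<Sum>w\<in>F \<union> G. (a * zero_ext F c w + b * zero_ext G d w) * S w) = a * (\<Sum>w\<in>F. c w * S w) + b * (\<Sum>w\<in>G. d w * S w)" for S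
  proof -
    have "(\<Sum>w\<in>F \<union> G. (a * zero_ext F c w + b * zero_ext G d w) * S w) = a * (\<Sum>w\<in>F \<union> G. zero_ext F c w * S w) + b * (\<Sum>w\<in>F \<union> G. zero_ext G d w * S w)"
      by (simp add: algebra_simps sum.distrib sum_distrib_left)
    also have "\<dots> = a * (\<Sum>w\<in>F. c w * S w) + b * (\<Sum>w\<in>G. d w * S w)"
      using assms by (simp add: sum_zero_ext)
    finally show ?thesis .
  qed
  thus ?thesis unfolding lincomb_def pol_def by simp
qed

lemma poly_lincomb: "p \<in> poly_ops n \<Longrightarrow> q \<in> poly_ops n \<Longrightarrow> lincomb a p b q \<in> poly_ops n"
  unfolding poly_ops_iff by (metis finite_UnI le_sup_iff pol_lincomb)

definition splittings where "splittings F G x = {p \<in> F \<times> G. fst p @ snd p = x}"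

lemma pol_comp:
  assumes F: "finite F" "F \<subseteq> words n" and G: "finite G" "G \<subseteq> words n"
  shows "pol n F c \<circ> pol n G d = pol n ((\<lambda>p. fst p @ snd p) ` (F \<times> G))
      (\<lambda>x. \<Sum>p\<in>splittings F G x. c (fst p) * d (snd p))"
proof (rule ext)
  fix f
  let ?H = "(\<lambda>p. fst p @ snd p) ` (F \<times> G)"
  have H: "?H \<subseteq> words n" using F G by (auto simp: words_append)
  show "(pol n F c \<circ> pol n G d) f = pol n ?H (\<lambda>x. \<Sum>p\<in>splittings F G x. c (fst p) * d (snd p)) f"
  proof (cases "f \<in> fock n")
    case False
    thus ?thesis by (simp add: pol_out pol_fock_eq[OF F(2)])
  next
    case True
    have pf: "pol n G d f \<in> fock n" using bop_fock[OF bop_pol[OF G(2) G(1)] True] .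
    show ?thesis
    proof (rule ext)
      fix x
      have "(pol n F c \<circ> pol n G d) f x = (\<Sum>u\<in>F. c u * shiftw u (\<lambda>y. \<Sum>v\<in>G. d v * shiftw v f y) x)"
        using pol_fock_eq[OF F(2) pf] pol_fock_eq[OF G(2) True] by simp
      also have "\<dots> = (\<Sum>u\<in>F. \<Sum>v\<in>G. c u * d v * shiftw (u @ v) f x)"
        by (simp add: shiftw_sum shiftw_append sum_distrib_left mult.assoc)
      also have "\<dots> = (\<Sum>p\<in>F \<times> G. c (fst p) * d (snd p) * shiftw (fst p @ snd p) f x)"
        by (simp add: sum.cartesian_product case_prod_beta)
      also have "\<dots> = (\<Sum>y\<in>?H. \<Sum>p\<in>splittings F G y. c (fst p) * d (snd p) * shiftw (fst p @ snd p) f x)"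
        unfolding splittings_def using F G by (intro sum.image_gen) auto
      also have "\<dots> = (\<Sum>y\<in>?H. (\<Sum>p\<in>splittings F G y. c (fst p) * d (snd p)) * shiftw y f x)"
        by (intro sum.cong refl) (auto simp: splittings_def sum_distrib_right)
      also have "\<dots> = pol n ?H (\<lambda>x. \<Sum>p\<in>splittings F G x. c (fst p) * d (snd p)) f x"
        using pol_fock_eq[OF H True] by simp
      finally show "(pol n F c \<circ> pol n G d) f x = pol n ?H (\<lambda>x. \<Sum>p\<in>splittings F G x. c (fst p) * d (snd p)) f x" .
    qed
  qed
qed

lemma poly_comp: "p \<in> poly_ops n \<Longrightarrow> q \<in> poly_ops n \<Longrightarrow> p \<circ> q \<in> poly_ops n"
proof -
  assume "p \<in> poly_ops n" "q \<in> poly_ops n"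
  then obtain F c G d where F: "finite F" "F \<subseteq> words n" "p = pol n F c"
    and G: "finite G" "G \<subseteq> words n" "q = pol n G d" unfolding poly_ops_iff by auto
  show ?thesis unfolding F(3) G(3) pol_comp[OF F(1,2) G(1,2)]
    by (rule pol_in) (use F G in \<open>auto simp: words_append\<close>)
qed

lemma pol_single: "pol n {u} (\<lambda>_. 1) = Sword n u"
  unfolding pol_def by auto

lemma Sword_poly: "u \<in> words n \<Longrightarrow> Sword n u \<in> poly_ops n"
  using pol_in[of "{u}" n "\<lambda>_. 1"] pol_single by simp

lemma IdF_poly: "IdF n \<in> poly_ops n"
  using Sword_poly[of "[]" n] by (simp add: Sword_Nil)

lemma Sop_Sword: "Sop n i = Sword n [i]"
proof (rule ext)
  fix f
  show "Sop n i f = Sword n [i] f"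
    by (cases "f \<in> fock n") (auto simp: Sword_Cons Sword_Nil IdF_def Sop_def zero_fun_def split: list.split)
qed

lemma Sop_poly: "i < n \<Longrightarrow> Sop n i \<in> poly_ops n"
  using Sword_poly[of "[i]" n] by (simp add: Sop_Sword words_Cons)

section \<open>The disc algebra\<close>

definition approx :: "nat \<Rightarrow> fop \<Rightarrow> (nat \<Rightarrow> fop) \<Rightarrow> bool" where
  "approx n A p \<longleftrightarrow> (\<forall>m. p m \<in> poly_ops n) \<and> (\<lambda>m. opnorm n (lincomb 1 A (-1) (p m))) \<longlonglongrightarrow> 0"

lemma LIMSEQ_zero_squeeze: assumes "\<And>m. 0 \<le> a m" "\<And>m. a m \<le> b m" "b \<longlonglongrightarrow> 0" shows "a \<longlonglongrightarrow> (0::real)"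
  by (rule tendsto_sandwich[of "\<lambda>_. 0" a sequentially b]) (use assms in auto)

lemma discalg_iff_lincomb: "A \<in> discalg n \<longleftrightarrow> bop n A \<and> (\<forall>e>0. \<exists>p\<in>poly_ops n. opnorm n (lincomb 1 A (-1) p) < e)"
proof -
  have "\<And>p. (\<lambda>f. A f - p f) = lincomb 1 A (-1) p" by (rule diff_lincomb)
  thus ?thesis unfolding discalg_def by simp
qed

lemma discalg_iff: "A \<in> discalg n \<longleftrightarrow> bop n A \<and> (\<exists>p. approx n A p)"
proof
  assume A: "A \<in> discalg n"
  hence bA: "bop n A" unfolding discalg_def by auto
  have "\<forall>m. \<exists>p\<in>poly_ops n. opnorm n (lincomb 1 A (-1) p) < inverse (real (Suc m))"
    using A unfolding discalg_iff_lincomb by auto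
  then obtain p where p: "\<And>m. p m \<in> poly_ops n" "\<And>m. opnorm n (lincomb 1 A (-1) (p m)) < inverse (real (Suc m))"
    by metis
  have "(\<lambda>m. opnorm n (lincomb 1 A (-1) (p m))) \<longlonglongrightarrow> 0"
    by (rule LIMSEQ_zero_squeeze[OF opnorm_nonneg[OF bop_lincomb[OF bA bop_poly[OF p(1)]]] less_imp_le[OF p(2)] LIMSEQ_inverse_real_of_nat])
  thus "bop n A \<and> (\<exists>p. approx n A p)" using bA p unfolding approx_def by auto
next
  assume "bop n A \<and> (\<exists>p. approx n A p)"
  then obtain p where bA: "bop n A" and p: "approx n A p" by auto
  show "A \<in> discalg n" unfolding discalg_iff_lincomb
  proof (intro conjI allI impI bA)
    fix e :: real assume e: "e > 0"
    from p have "eventually (\<lambda>m. opnorm n (lincomb 1 A (-1) (p m)) < e) sequentially"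
      unfolding approx_def using e by (auto dest: order_tendstoD(2))
    then obtain m where "opnorm n (lincomb 1 A (-1) (p m)) < e" by (auto dest: eventually_happens)
    thus "\<exists>q\<in>poly_ops n. opnorm n (lincomb 1 A (-1) q) < e" using p unfolding approx_def by auto
  qed
qed

lemma lincomb_self: "lincomb 1 p (-1) p = (\<lambda>f. 0)"
  unfolding lincomb_def by (auto simp: zero_fun_def)

lemma poly_discalg: "p \<in> poly_ops n \<Longrightarrow> p \<in> discalg n"
  unfolding discalg_iff approx_def
  by (auto intro!: exI[of _ "\<lambda>_. p"] bop_poly simp: lincomb_self opnorm_zero)

lemma discalg_bop: "A \<in> discalg n \<Longrightarrow> bop n A"
  unfolding discalg_def by auto

lemma approx_bound: "approx n A p \<Longrightarrow> (\<lambda>m. opnorm n (lincomb 1 A (-1) (p m))) \<longlonglongrightarrow> 0"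
  unfolding approx_def by auto
lemma approx_poly: "approx n A p \<Longrightarrow> p m \<in> poly_ops n"
  unfolding approx_def by auto

lemma lincomb_diff_lincomb:
  "lincomb 1 (lincomb a A b B) (-1) (lincomb a P b Q) = lincomb a (lincomb 1 A (-1) P) b (lincomb 1 B (-1) Q)"
  unfolding lincomb_def by (auto simp: algebra_simps)

lemma approx_lincomb:
  assumes A: "A \<in> discalg n" "approx n A p" and B: "B \<in> discalg n" "approx n B q"
  shows "approx n (lincomb a A b B) (\<lambda>m. lincomb a (p m) b (q m))"
  unfolding approx_def
proof
  show "\<forall>m. lincomb a (p m) b (q m) \<in> poly_ops n" using approx_poly A B poly_lincomb by blast
  let ?x = "\<lambda>m. opnorm n (lincomb 1 A (-1) (p m))" and ?y = "\<lambda>m. opnorm n (lincomb 1 B (-1) (q m))"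
  have bx: "bop n (lincomb 1 A (-1) (p m))" for m using A by (intro bop_lincomb discalg_bop bop_poly approx_poly)
  have by': "bop n (lincomb 1 B (-1) (q m))" for m using B by (intro bop_lincomb discalg_bop bop_poly approx_poly)
  show "(\<lambda>m. opnorm n (lincomb 1 (lincomb a A b B) (-1) (lincomb a (p m) b (q m)))) \<longlonglongrightarrow> 0"
  proof (rule LIMSEQ_zero_squeeze)
    fix m
    show "0 \<le> opnorm n (lincomb 1 (lincomb a A b B) (- 1) (lincomb a (p m) b (q m)))"
      unfolding lincomb_diff_lincomb by (intro opnorm_nonneg bop_lincomb bx by')
    show "opnorm n (lincomb 1 (lincomb a A b B) (- 1) (lincomb a (p m) b (q m))) \<le> cmod a * ?x m + cmod b * ?y m"
      unfolding lincomb_diff_lincomb by (intro opnorm_lincomb bx by')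
  next
    show "(\<lambda>m. cmod a * ?x m + cmod b * ?y m) \<longlonglongrightarrow> 0"
      using tendsto_add[OF tendsto_mult_right_zero[OF approx_bound[OF A(2)]] tendsto_mult_right_zero[OF approx_bound[OF B(2)]]]
      by simp
  qed
qed

lemma discalg_lincomb: "A \<in> discalg n \<Longrightarrow> B \<in> discalg n \<Longrightarrow> lincomb a A b B \<in> discalg n"
  using approx_lincomb discalg_iff bop_lincomb by meson

lemma comp_diff:
  assumes "bop n A" "bop n B" "bop n P" "bop n Q"
  shows "lincomb 1 (A \<circ> B) (-1) (P \<circ> Q) = lincomb 1 (A \<circ> lincomb 1 B (-1) Q) 1 (lincomb 1 A (-1) P \<circ> Q)"
proof (rule ext)
  fix f
  show "lincomb 1 (A \<circ> B) (-1) (P \<circ> Q) f = lincomb 1 (A \<circ> lincomb 1 B (-1) Q) 1 (lincomb 1 A (-1) P \<circ> Q) f"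
  proof (cases "f \<in> fock n")
    case True
    have "A (lincomb 1 B (-1) Q f) = (\<lambda>x. 1 * A (B f) x + (-1) * A (Q f) x)"
      unfolding lincomb_app by (rule bop_lin[OF assms(1) bop_fock[OF assms(2) True] bop_fock[OF assms(4) True]])
    thus ?thesis by (simp add: lincomb_app)
  next
    case False
    thus ?thesis using assms by (simp add: lincomb_app bop_out bop_zero' zero_fun_def bop_zero)
  qed
qed

lemma approx_comp:
  assumes A: "A \<in> discalg n" "approx n A p" and B: "B \<in> discalg n" "approx n B q"
  shows "approx n (A \<circ> B) (\<lambda>m. p m \<circ> q m)"
  unfolding approx_def
proof
  show "\<forall>m. p m \<circ> q m \<in> poly_ops n" using approx_poly A B poly_comp by blast
  let ?x = "\<lambda>m. opnorm n (lincomb 1 A (-1) (p m))" and ?y = "\<lambda>m. opnorm n (lincomb 1 B (-1) (q m))"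
  have bA: "bop n A" and bB: "bop n B" using A B discalg_bop by auto
  have bp: "bop n (p m)" and bq: "bop n (q m)" for m using A B approx_poly bop_poly by auto
  have bx: "bop n (lincomb 1 A (-1) (p m))" for m using bA bp by (intro bop_lincomb)
  have by': "bop n (lincomb 1 B (-1) (q m))" for m using bB bq by (intro bop_lincomb)
  have qb: "opnorm n (q m) \<le> opnorm n B + ?y m" for m
  proof -
    have "q m = lincomb 1 B (-1) (lincomb 1 B (-1) (q m))" unfolding lincomb_def by auto
    hence "opnorm n (q m) \<le> cmod 1 * opnorm n B + cmod (-1) * ?y m"
      using opnorm_lincomb[OF bB by'[of m], of 1 "-1"] by simp
    thus ?thesis by simp
  qed
  show "(\<lambda>m. opnorm n (lincomb 1 (A \<circ> B) (-1) (p m \<circ> q m))) \<longlonglongrightarrow> 0"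
  proof (rule LIMSEQ_zero_squeeze)
    fix m
    show "0 \<le> opnorm n (lincomb 1 (A \<circ> B) (-1) (p m \<circ> q m))"
      by (intro opnorm_nonneg bop_lincomb bop_comp bA bB bp bq)
    have "opnorm n (lincomb 1 (A \<circ> B) (-1) (p m \<circ> q m))
        \<le> cmod 1 * opnorm n (A \<circ> lincomb 1 B (-1) (q m)) + cmod 1 * opnorm n (lincomb 1 A (-1) (p m) \<circ> q m)"
      unfolding comp_diff[OF bA bB bp bq] by (intro opnorm_lincomb bop_comp bA bB bp bq bx by')
    also have "\<dots> \<le> opnorm n A * ?y m + ?x m * (opnorm n B + ?y m)"
    proof -
      have "opnorm n (A \<circ> lincomb 1 B (-1) (q m)) \<le> opnorm n A * ?y m" by (rule opnorm_comp[OF bA by'])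
      moreover have "opnorm n (lincomb 1 A (-1) (p m) \<circ> q m) \<le> ?x m * opnorm n (q m)" by (rule opnorm_comp[OF bx bq])
      moreover have "?x m * opnorm n (q m) \<le> ?x m * (opnorm n B + ?y m)"
        by (rule mult_left_mono[OF qb opnorm_nonneg[OF bx]])
      ultimately show ?thesis by simp
    qed
    finally show "opnorm n (lincomb 1 (A \<circ> B) (-1) (p m \<circ> q m)) \<le> opnorm n A * ?y m + ?x m * (opnorm n B + ?y m)" .
  next
    have "(\<lambda>m. opnorm n A * ?y m + ?x m * (opnorm n B + ?y m)) \<longlonglongrightarrow> opnorm n A * 0 + 0 * (opnorm n B + 0)"
      by (intro tendsto_intros approx_bound A B)
    thus "(\<lambda>m. opnorm n A * ?y m + ?x m * (opnorm n B + ?y m)) \<longlonglongrightarrow> 0" by simp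
  qed
qed

lemma discalg_comp: "A \<in> discalg n \<Longrightarrow> B \<in> discalg n \<Longrightarrow> A \<circ> B \<in> discalg n"
  using approx_comp discalg_iff bop_comp by meson

lemma IdF_discalg: "IdF n \<in> discalg n" using poly_discalg IdF_poly by auto
lemma Sop_discalg: "i < n \<Longrightarrow> Sop n i \<in> discalg n" using poly_discalg Sop_poly by auto
lemma Sword_discalg: "u \<in> words n \<Longrightarrow> Sword n u \<in> discalg n" using poly_discalg Sword_poly by auto

lemma zero_discalg: "(\<lambda>f. 0) \<in> discalg n"
proof -
  have "(\<lambda>f. 0) = lincomb 0 (IdF n) 0 (IdF n)" unfolding lincomb_def by (auto simp: zero_fun_def)
  thus ?thesis using discalg_lincomb IdF_discalg by metis
qed

lemma zero_discalg'[simp]: "0 \<in> discalg n"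
proof -
  have "(0::fop) = (\<lambda>f. 0)" by (rule zero_fun_def)
  thus ?thesis using zero_discalg by metis
qed

section \<open>Evaluation of polynomials at points of the closed ball\<close>

definition word_pow :: "(nat \<Rightarrow> complex) \<Rightarrow> nat list \<Rightarrow> complex" where
  "word_pow w u = prod_list (map w u)"

lemma word_pow_append: "word_pow w (u @ v) = word_pow w u * word_pow w v" unfolding word_pow_def by simp

definition poly_eval :: "(nat \<Rightarrow> complex) \<Rightarrow> fop \<Rightarrow> complex" where
  "poly_eval w T = (\<Sum>x\<in>{x. T vacuum x \<noteq> 0}. T vacuum x * word_pow w x)"

lemma pol_vacuum: assumes "finite F" "F \<subseteq> words n"
  shows "pol n F c vacuum x = (if x \<in> F then c x else 0)"
proof -
  have "pol n F c vacuum x = (\<Sum>w\<in>F. c w * (if x = w then 1 else 0))"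
    using pol_fock_eq[OF assms(2) vacuum_fock] by (simp add: shiftw_vacuum)
  also have "\<dots> = (\<Sum>w\<in>F. if x = w then c w else 0)" by (rule sum.cong) auto
  also have "\<dots> = (if x \<in> F then c x else 0)"
    using assms(1) by (simp add: sum.delta)
  finally show ?thesis .
qed

lemma poly_eval_pol: assumes "finite F" "F \<subseteq> words n" shows "poly_eval w (pol n F c) = (\<Sum>u\<in>F. c u * word_pow w u)"
proof -
  have S: "{x. pol n F c vacuum x \<noteq> 0} = {x \<in> F. c x \<noteq> 0}" using pol_vacuum[OF assms] by auto
  have "poly_eval w (pol n F c) = (\<Sum>x\<in>{x \<in> F. c x \<noteq> 0}. c x * word_pow w x)"
    unfolding poly_eval_def S by (intro sum.cong refl) (auto simp: pol_vacuum[OF assms])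
  also have "\<dots> = (\<Sum>u\<in>F. c u * word_pow w u)"
    by (rule sum.mono_neutral_left) (use assms in auto)
  finally show ?thesis .
qed

lemma poly_eval_lincomb: "p \<in> poly_ops n \<Longrightarrow> q \<in> poly_ops n \<Longrightarrow> poly_eval w (lincomb a p b q) = a * poly_eval w p + b * poly_eval w q"
proof -
  assume "p \<in> poly_ops n" "q \<in> poly_ops n"
  then obtain F c G d where F: "finite F" "F \<subseteq> words n" "p = pol n F c"
    and G: "finite G" "G \<subseteq> words n" "q = pol n G d" unfolding poly_ops_iff by auto
  have "poly_eval w (lincomb a p b q) = (\<Sum>u\<in>F \<union> G. (a * zero_ext F c u + b * zero_ext G d u) * word_pow w u)"
    unfolding F(3) G(3) pol_lincomb[OF F(1) G(1)] using F G by (subst poly_eval_pol) auto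
  also have "\<dots> = a * (\<Sum>u\<in>F \<union> G. zero_ext F c u * word_pow w u) + b * (\<Sum>u\<in>F \<union> G. zero_ext G d u * word_pow w u)"
    by (simp add: algebra_simps sum.distrib sum_distrib_left)
  also have "\<dots> = a * poly_eval w p + b * poly_eval w q"
    using F G by (simp add: sum_zero_ext poly_eval_pol)
  finally show ?thesis .
qed

lemma poly_eval_comp: "p \<in> poly_ops n \<Longrightarrow> q \<in> poly_ops n \<Longrightarrow> poly_eval w (p \<circ> q) = poly_eval w p * poly_eval w q"
proof -
  assume "p \<in> poly_ops n" "q \<in> poly_ops n"
  then obtain F c G d where F: "finite F" "F \<subseteq> words n" "p = pol n F c"
    and G: "finite G" "G \<subseteq> words n" "q = pol n G d" unfolding poly_ops_iff by auto
  let ?H = "(\<lambda>p. fst p @ snd p) ` (F \<times> G)"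
  have H: "finite ?H" "?H \<subseteq> words n" using F G by (auto simp: words_append)
  have "poly_eval w (p \<circ> q) = (\<Sum>y\<in>?H. (\<Sum>p\<in>splittings F G y. c (fst p) * d (snd p)) * word_pow w y)"
    unfolding F(3) G(3) pol_comp[OF F(1,2) G(1,2)] by (rule poly_eval_pol[OF H])
  also have "\<dots> = (\<Sum>y\<in>?H. \<Sum>p\<in>splittings F G y. c (fst p) * d (snd p) * word_pow w (fst p @ snd p))"
    by (intro sum.cong refl) (auto simp: splittings_def sum_distrib_right)
  also have "\<dots> = (\<Sum>p\<in>F \<times> G. c (fst p) * d (snd p) * word_pow w (fst p @ snd p))"
    unfolding splittings_def using F G by (intro sum.image_gen[symmetric]) auto
  also have "\<dots> = (\<Sum>u\<in>F. \<Sum>v\<in>G. (c u * word_pow w u) * (d v * word_pow w v))"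
    by (simp add: sum.cartesian_product case_prod_beta word_pow_append algebra_simps)
  also have "\<dots> = poly_eval w p * poly_eval w q"
    using F G by (simp add: poly_eval_pol sum_product)
  finally show ?thesis .
qed

lemma poly_eval_Sword: "u \<in> words n \<Longrightarrow> poly_eval w (Sword n u) = word_pow w u"
  using poly_eval_pol[of "{u}" n w "\<lambda>_. 1"] pol_single by simp

definition short_words :: "nat \<Rightarrow> nat \<Rightarrow> nat list set" where
  "short_words n N = {x \<in> words n. length x \<le> N}"

lemma finite_short_words: "finite (short_words n N)"
proof -
  have "short_words n N = {xs. set xs \<subseteq> {..<n} \<and> length xs \<le> N}" unfolding short_words_def words_def by auto
  thus ?thesis using finite_lists_length_le[of "{..<n}" N] by simp
qed

lemma short_words_0: "short_words n 0 = {[]}" unfolding short_words_def by auto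

lemma short_words_Suc: "short_words n (Suc N) = insert [] ((\<lambda>p. fst p # snd p) ` ({..<n} \<times> short_words n N))"
proof (rule set_eqI)
  fix x show "x \<in> short_words n (Suc N) \<longleftrightarrow> x \<in> insert [] ((\<lambda>p. fst p # snd p) ` ({..<n} \<times> short_words n N))"
  proof (cases x)
    case Nil thus ?thesis by (simp add: short_words_def)
  next
    case (Cons i v)
    have "x \<in> short_words n (Suc N) \<longleftrightarrow> i < n \<and> v \<in> short_words n N" using Cons by (auto simp: short_words_def words_Cons)
    also have "\<dots> \<longleftrightarrow> x \<in> insert [] ((\<lambda>p. fst p # snd p) ` ({..<n} \<times> short_words n N))"
      using Cons by (auto simp: image_iff)
    finally show ?thesis .
  qed
qed

definition pow_sqsum :: "nat \<Rightarrow> (nat \<Rightarrow> complex) \<Rightarrow> nat \<Rightarrow> real" where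
  "pow_sqsum n w N = (\<Sum>v\<in>short_words n N. (cmod (word_pow w v))^2)"

definition sqnorm :: "nat \<Rightarrow> (nat \<Rightarrow> complex) \<Rightarrow> real" where
  "sqnorm n w = (\<Sum>i<n. (cmod (w i))^2)"

lemma pow_sqsum_Suc: "pow_sqsum n w (Suc N) = 1 + sqnorm n w * pow_sqsum n w N"
proof -
  have inj: "inj_on (\<lambda>p. fst p # snd p) ({..<n} \<times> short_words n N)" by (auto intro: inj_onI)
  have "pow_sqsum n w (Suc N) = 1 + (\<Sum>v\<in>(\<lambda>p. fst p # snd p) ` ({..<n} \<times> short_words n N). (cmod (word_pow w v))^2)"
    unfolding pow_sqsum_def short_words_Suc using finite_short_words by (subst sum.insert) (auto simp: word_pow_def)
  also have "(\<Sum>v\<in>(\<lambda>p. fst p # snd p) ` ({..<n} \<times> short_words n N). (cmod (word_pow w v))^2)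
      = (\<Sum>p\<in>{..<n} \<times> short_words n N. (cmod (word_pow w (fst p # snd p)))^2)"
    by (subst sum.reindex[OF inj]) simp
  also have "\<dots> = (\<Sum>i<n. \<Sum>v\<in>short_words n N. (cmod (w i))^2 * (cmod (word_pow w v))^2)"
    by (simp add: sum.cartesian_product case_prod_beta word_pow_def norm_mult power_mult_distrib)
  also have "\<dots> = sqnorm n w * pow_sqsum n w N"
    unfolding sqnorm_def pow_sqsum_def by (simp add: sum_distrib_left sum_distrib_right) (subst sum.swap, rule refl)
  finally show ?thesis .
qed

lemma pow_sqsum_geometric: "pow_sqsum n w N = (\<Sum>m\<le>N. (sqnorm n w)^m)"
proof (induction N)
  case 0 thus ?case by (simp add: pow_sqsum_def short_words_0 word_pow_def)
next
  case (Suc N)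
  have "(\<Sum>m\<le>Suc N. (sqnorm n w)^m) = 1 + (\<Sum>m\<le>N. (sqnorm n w)^(Suc m))"
    by (subst sum.atMost_Suc_shift) simp
  also have "\<dots> = 1 + sqnorm n w * (\<Sum>m\<le>N. (sqnorm n w)^m)" by (simp add: sum_distrib_left)
  finally show ?case using Suc by (simp add: pow_sqsum_Suc)
qed

lemma geometric_sum_ge: assumes "0 \<le> r" "r \<le> (1::real)" shows "real (M + 1) * r^M \<le> (\<Sum>m\<le>M. r^m)"
proof -
  have "(\<Sum>m\<le>M. r^M) \<le> (\<Sum>m\<le>M. r^m)" by (intro sum_mono power_decreasing) (use assms in auto)
  thus ?thesis by simp
qed

lemma geometric_sum_increment: assumes "0 \<le> r" "r \<le> (1::real)"
  shows "(\<Sum>m\<le>M + d. r^m) - (\<Sum>m\<le>M. r^m) \<le> real d * r^M" "0 \<le> (\<Sum>m\<le>M + d. r^m) - (\<Sum>m\<le>M. r^m)"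
proof -
  have "(\<Sum>m\<le>M + d. r^m) - (\<Sum>m\<le>M. r^m) \<le> real d * r^M \<and> 0 \<le> (\<Sum>m\<le>M + d. r^m) - (\<Sum>m\<le>M. r^m)"
  proof (induction d)
    case 0 thus ?case by simp
  next
    case (Suc d)
    have "r^(Suc (M + d)) \<le> r^M" by (rule power_decreasing) (use assms in auto)
    moreover have "0 \<le> r^(Suc (M + d))" using assms by simp
    ultimately show ?case using Suc by (simp add: algebra_simps)
  qed
  thus "(\<Sum>m\<le>M + d. r^m) - (\<Sum>m\<le>M. r^m) \<le> real d * r^M" "0 \<le> (\<Sum>m\<le>M + d. r^m) - (\<Sum>m\<le>M. r^m)" by auto
qed

lemma geometric_sum_increment_ratio: assumes "0 \<le> r" "r \<le> (1::real)"
  shows "real (M + d + 1) * ((\<Sum>m\<le>M + d. r^m) - (\<Sum>m\<le>M. r^m)) \<le> real d * (\<Sum>m\<le>M + d. r^m)"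
proof -
  let ?T = "(\<Sum>m\<le>M + d. r^m) - (\<Sum>m\<le>M. r^m)" and ?S = "\<Sum>m\<le>M. r^m"
  have T: "?T \<le> real d * r^M" "0 \<le> ?T" using geometric_sum_increment[OF assms] by auto
  have "real (M + 1) * ?T \<le> real (M + 1) * (real d * r^M)" using T by (intro mult_left_mono) auto
  also have "\<dots> = real d * (real (M + 1) * r^M)" by simp
  also have "\<dots> \<le> real d * ?S" by (intro mult_left_mono geometric_sum_ge assms) auto
  finally have "real (M + 1) * ?T \<le> real d * ?S" .
  hence "real (M + d + 1) * ?T \<le> real d * ?S + real d * ?T" by (simp add: algebra_simps)
  thus ?thesis by (simp add: algebra_simps)
qed

lemma sqnorm_cballN: "w \<in> cballN n \<Longrightarrow> 0 \<le> sqnorm n w \<and> sqnorm n w \<le> 1"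
  unfolding cballN_def sqnorm_def by (auto intro: sum_nonneg)

lemma cballN_coord: assumes "w \<in> cballN n" shows "cmod (w i) \<le> 1"
proof (cases "i < n")
  case True
  have "(cmod (w i))^2 \<le> (\<Sum>j<n. (cmod (w j))^2)"
    using True by (intro member_le_sum) auto
  also have "\<dots> \<le> 1" using assms unfolding cballN_def by auto
  finally show ?thesis by (simp add: power_le_one_iff abs_le_square_iff[symmetric])
next
  case False thus ?thesis using assms unfolding cballN_def by auto
qed

lemma norm_word_pow_le1: "w \<in> cballN n \<Longrightarrow> cmod (word_pow w u) \<le> 1"
  unfolding word_pow_def
proof (induction u)
  case Nil thus ?case by simp
next
  case (Cons i u)
  have "cmod (w i * prod_list (map w u)) \<le> 1 * 1"
    unfolding norm_mult using Cons cballN_coord[OF Cons.prems] by (intro mult_mono) auto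
  thus ?case by simp
qed

definition kernel_vec :: "nat \<Rightarrow> (nat \<Rightarrow> complex) \<Rightarrow> nat \<Rightarrow> fvec" where
  "kernel_vec n w N = (\<lambda>x. if x \<in> short_words n N then cnj (word_pow w x) else 0)"

lemma kernel_vec_fock: "kernel_vec n w N \<in> fock n" "fnorm (kernel_vec n w N) \<le> sqrt (pow_sqsum n w N)"
proof -
  have *: "l2 F (kernel_vec n w N) \<le> sqrt (pow_sqsum n w N)" if F: "finite F" for F
  proof -
    have "(\<Sum>x\<in>F. (cmod (kernel_vec n w N x))^2) = (\<Sum>x\<in>F \<inter> short_words n N. (cmod (kernel_vec n w N x))^2)"
      by (rule sum_zero_outside[OF F]) (simp add: kernel_vec_def)
    also have "\<dots> = (\<Sum>x\<in>F \<inter> short_words n N. (cmod (word_pow w x))^2)"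
      by (rule sum.cong) (auto simp: kernel_vec_def)
    also have "\<dots> \<le> pow_sqsum n w N" unfolding pow_sqsum_def
      by (rule sum_mono2[OF finite_short_words]) auto
    finally show ?thesis unfolding L2_set_def by simp
  qed
  show "fnorm (kernel_vec n w N) \<le> sqrt (pow_sqsum n w N)" using fnorm_leI(2)[OF *] .
  have "kernel_vec n w N x = 0" if "x \<notin> words n" for x using that by (simp add: kernel_vec_def short_words_def)
  thus "kernel_vec n w N \<in> fock n" using fnorm_leI(1)[OF *] unfolding fock_def by auto
qed

lemma take_len_le: "take (length u) x = u \<Longrightarrow> length u \<le> length x"
proof -
  assume "take (length u) x = u"
  hence "length (take (length u) x) = length u" by simp
  thus ?thesis by simp
qed

lemma kernel_pairing_shiftw: assumes u: "u \<in> words n"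
  shows "(\<Sum>x\<in>short_words n N. shiftw u (kernel_vec n w N) x * word_pow w x)
     = (if length u \<le> N then word_pow w u * complex_of_real (pow_sqsum n w (N - length u)) else 0)"
proof (cases "length u \<le> N")
  case False
  have "shiftw u (kernel_vec n w N) x = 0" if "x \<in> short_words n N" for x
    using that False take_len_le[of u x] by (auto simp: shiftw_def short_words_def)
  thus ?thesis using False by simp
next
  case True
  let ?V = "short_words n (N - length u)"
  let ?g = "\<lambda>x. shiftw u (kernel_vec n w N) x * word_pow w x"
  have sub: "(\<lambda>v. u @ v) ` ?V \<subseteq> short_words n N" using u True by (auto simp: short_words_def words_append)
  have zero: "?g x = 0" if "x \<in> short_words n N - (\<lambda>v. u @ v) ` ?V" for x
  proof (cases "take (length u) x = u")
    case True
    then obtain v where x: "x = u @ v" by (metis append_take_drop_id)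
    have "v \<in> ?V" using that x by (auto simp: short_words_def words_append)
    thus ?thesis using that x by auto
  qed (simp add: shiftw_def)
  have "(\<Sum>x\<in>short_words n N. ?g x) = (\<Sum>x\<in>(\<lambda>v. u @ v) ` ?V. ?g x)"
    by (rule sum.mono_neutral_right[OF finite_short_words sub]) (use zero in auto)
  also have "\<dots> = (\<Sum>v\<in>?V. ?g (u @ v))" by (rule sum.reindex[unfolded comp_def]) (auto intro: inj_onI)
  also have "\<dots> = (\<Sum>v\<in>?V. word_pow w u * complex_of_real ((cmod (word_pow w v))^2))"
  proof (rule sum.cong[OF refl])
    fix v assume v: "v \<in> ?V"
    hence "v \<in> short_words n N" by (auto simp: short_words_def)
    hence "?g (u @ v) = cnj (word_pow w v) * (word_pow w u * word_pow w v)" by (simp add: shiftw_def kernel_vec_def word_pow_append)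
    also have "\<dots> = word_pow w u * (word_pow w v * cnj (word_pow w v))" by (simp add: algebra_simps)
    also have "\<dots> = word_pow w u * complex_of_real ((cmod (word_pow w v))^2)" by (simp only: complex_norm_square)
    finally show "?g (u @ v) = word_pow w u * complex_of_real ((cmod (word_pow w v))^2)" .
  qed
  also have "\<dots> = word_pow w u * complex_of_real (pow_sqsum n w (N - length u))"
    unfolding pow_sqsum_def by (simp add: sum_distrib_left)
  finally show ?thesis using True by simp
qed

lemma kernel_pairing_pol: assumes F: "finite F" "F \<subseteq> words n"
  shows "(\<Sum>x\<in>short_words n N. pol n F c (kernel_vec n w N) x * word_pow w x)
    = (\<Sum>u\<in>F. c u * (if length u \<le> N then word_pow w u * complex_of_real (pow_sqsum n w (N - length u)) else 0))"
proof -
  have "(\<Sum>x\<in>short_words n N. pol n F c (kernel_vec n w N) x * word_pow w x) = (\<Sum>x\<in>short_words n N. \<Sum>u\<in>F. c u * (shiftw u (kernel_vec n w N) x * word_pow w x))"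
    unfolding pol_fock_eq[OF F(2) kernel_vec_fock(1)] by (simp add: sum_distrib_right mult.assoc)
  also have "\<dots> = (\<Sum>u\<in>F. c u * (\<Sum>x\<in>short_words n N. shiftw u (kernel_vec n w N) x * word_pow w x))"
    by (subst sum.swap) (simp add: sum_distrib_left)
  also have "\<dots> = (\<Sum>u\<in>F. c u * (if length u \<le> N then word_pow w u * complex_of_real (pow_sqsum n w (N - length u)) else 0))"
    using F(2) by (intro sum.cong refl) (auto simp: kernel_pairing_shiftw)
  finally show ?thesis .
qed

lemma pow_sqsum_ge1: assumes "w \<in> cballN n" shows "1 \<le> pow_sqsum n w N"
proof -
  have "(sqnorm n w)^0 \<le> (\<Sum>m\<le>N. (sqnorm n w)^m)"
    by (rule member_le_sum) (use sqnorm_cballN[OF assms] in auto)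
  thus ?thesis unfolding pow_sqsum_geometric by simp
qed

lemma kernel_defect_bounds: assumes w: "w \<in> cballN n"
  shows "0 \<le> 1 - (if length u \<le> N then pow_sqsum n w (N - length u) else 0) / pow_sqsum n w N"
    "1 - (if length u \<le> N then pow_sqsum n w (N - length u) else 0) / pow_sqsum n w N \<le> real (length u) / real (Suc N)"
proof -
  have S1: "1 \<le> pow_sqsum n w N" using pow_sqsum_ge1[OF w] .
  have r: "0 \<le> sqnorm n w" "sqnorm n w \<le> 1" using sqnorm_cballN[OF w] by auto
  have "0 \<le> 1 - (if length u \<le> N then pow_sqsum n w (N - length u) else 0) / pow_sqsum n w N \<and>
        1 - (if length u \<le> N then pow_sqsum n w (N - length u) else 0) / pow_sqsum n w N \<le> real (length u) / real (Suc N)"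
  proof (cases "length u \<le> N")
    case False
    have "1 \<le> real (length u) / real (Suc N)" using False by (simp add: field_simps)
    thus ?thesis using False by simp
  next
    case True
    define M where "M = N - length u"
    define d where "d = length u"
    have N: "N = M + d" using True unfolding M_def d_def by simp
    let ?S = "\<Sum>m\<le>M + d. (sqnorm n w)^m" and ?T = "\<Sum>m\<le>M. (sqnorm n w)^m"
    have SS: "pow_sqsum n w N = ?S" "pow_sqsum n w (N - length u) = ?T"
      using N by (simp_all add: pow_sqsum_geometric M_def)
    have Spos: "0 < ?S" using S1 SS by simp
    have "0 \<le> ?S - ?T" using geometric_sum_increment(2)[OF r] .
    hence a: "0 \<le> 1 - ?T / ?S" using Spos by (simp add: field_simps)
    have "real (M + d + 1) * (?S - ?T) \<le> real d * ?S" by (rule geometric_sum_increment_ratio[OF r])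
    hence "1 - ?T / ?S \<le> real d / real (M + d + 1)" using Spos
      by (simp add: field_simps)
    thus ?thesis using a True SS by (simp add: N d_def)
  qed
  thus "0 \<le> 1 - (if length u \<le> N then pow_sqsum n w (N - length u) else 0) / pow_sqsum n w N"
    "1 - (if length u \<le> N then pow_sqsum n w (N - length u) else 0) / pow_sqsum n w N \<le> real (length u) / real (Suc N)" by auto
qed

lemma kernel_pairing_bound:
  assumes T: "bop n T"
  shows "cmod (\<Sum>x\<in>short_words n N. T (kernel_vec n w N) x * word_pow w x) \<le> opnorm n T * pow_sqsum n w N"
proof -
  let ?W = "short_words n N" and ?S = "pow_sqsum n w N" and ?v = "kernel_vec n w N"
  have Tv: "T ?v \<in> fock n" using bop_fock[OF T kernel_vec_fock(1)] .
  have "cmod (\<Sum>x\<in>?W. T ?v x * word_pow w x) \<le> (\<Sum>x\<in>?W. cmod (T ?v x) * cmod (word_pow w x))"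
    by (rule order_trans[OF norm_sum]) (simp add: norm_mult)
  also have "\<dots> \<le> L2_set (\<lambda>x. cmod (T ?v x)) ?W * L2_set (\<lambda>x. cmod (word_pow w x)) ?W"
    using L2_set_mult_ineq[of "\<lambda>x. cmod (T ?v x)" "\<lambda>x. cmod (word_pow w x)" ?W] by simp
  also have "\<dots> \<le> fnorm (T ?v) * sqrt ?S"
    unfolding L2_set_def[of _ ?W, where f="\<lambda>x. cmod (word_pow w x)"] pow_sqsum_def[symmetric]
    by (intro mult_right_mono l2_le_fnorm[OF fock_bdd[OF Tv] finite_short_words]) (simp add: pow_sqsum_def sum_nonneg)
  also have "\<dots> \<le> (opnorm n T * sqrt ?S) * sqrt ?S"
  proof (intro mult_right_mono)
    show "fnorm (T ?v) \<le> opnorm n T * sqrt ?S"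
      using opnorm_le[OF T kernel_vec_fock(1)] mult_left_mono[OF kernel_vec_fock(2) opnorm_nonneg[OF T]]
      by (rule order_trans)
  qed (simp add: pow_sqsum_def sum_nonneg)
  also have "\<dots> = opnorm n T * ?S" by (simp add: mult.assoc pow_sqsum_def sum_nonneg)
  finally show ?thesis .
qed

text \<open>Pairing p(S) applied to the kernel vector with the kernel vector weighs the monomial u
  by t u / S = S_{N-|u|} / S_N, which differs from 1 by at most |u| / (N+1).\<close>

lemma poly_eval_bound_approx:
  assumes w: "w \<in> cballN n" and F: "finite F" "F \<subseteq> words n"
  shows "cmod (poly_eval w (pol n F c)) \<le> opnorm n (pol n F c) + (\<Sum>u\<in>F. cmod (c u) * real (length u)) / real (Suc N)"
proof -
  let ?p = "pol n F c"
  let ?W = "short_words n N"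
  let ?S = "pow_sqsum n w N"
  define t where "t (u::nat list) = (if length u \<le> N then pow_sqsum n w (N - length u) else 0)" for u
  define I where "I = (\<Sum>x\<in>?W. ?p (kernel_vec n w N) x * word_pow w x)"
  have bp: "bop n ?p" by (rule bop_pol[OF F(2) F(1)])
  have S1: "1 \<le> ?S" using pow_sqsum_ge1[OF w] .
  have Ib: "cmod I \<le> opnorm n ?p * ?S" unfolding I_def by (rule kernel_pairing_bound[OF bp])
  have Ieq: "I = (\<Sum>u\<in>F. c u * word_pow w u * complex_of_real (t u))"
    unfolding I_def kernel_pairing_pol[OF F] by (intro sum.cong refl) (simp add: t_def)
  have E: "poly_eval w ?p - I / complex_of_real ?S = (\<Sum>u\<in>F. c u * word_pow w u * complex_of_real (1 - t u / ?S))"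
    unfolding poly_eval_pol[OF F] Ieq using S1
    by (simp add: sum_divide_distrib sum_subtractf[symmetric] algebra_simps diff_divide_distrib)
  have "cmod (poly_eval w ?p - I / complex_of_real ?S) \<le> (\<Sum>u\<in>F. cmod (c u * word_pow w u * complex_of_real (1 - t u / ?S)))"
    unfolding E by (rule norm_sum)
  also have "\<dots> = (\<Sum>u\<in>F. cmod (c u) * cmod (word_pow w u) * \<bar>1 - t u / ?S\<bar>)"
    by (simp only: norm_mult norm_of_real)
  also have "\<dots> \<le> (\<Sum>u\<in>F. cmod (c u) * (real (length u) / real (Suc N)))"
  proof (rule sum_mono)
    fix u assume "u \<in> F"
    have hh: "cmod (word_pow w u) * \<bar>1 - t u / ?S\<bar> \<le> 1 * (real (length u) / real (Suc N))"
      using kernel_defect_bounds[OF w, of u N] norm_word_pow_le1[OF w, of u] unfolding t_def[symmetric]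
      by (intro mult_mono) auto
    from mult_left_mono[OF hh norm_ge_zero[of "c u"]]
    show "cmod (c u) * cmod (word_pow w u) * \<bar>1 - t u / ?S\<bar> \<le> cmod (c u) * (real (length u) / real (Suc N))"
      by (simp only: mult.assoc mult_1_left)
  qed
  also have "\<dots> = (\<Sum>u\<in>F. cmod (c u) * real (length u)) / real (Suc N)"
    by (simp add: sum_divide_distrib)
  finally have D: "cmod (poly_eval w ?p - I / complex_of_real ?S) \<le> (\<Sum>u\<in>F. cmod (c u) * real (length u)) / real (Suc N)" .
  have "cmod (I / complex_of_real ?S) \<le> opnorm n ?p" using Ib S1 by (simp add: norm_divide pos_divide_le_eq)
  moreover have "cmod (poly_eval w ?p) \<le> cmod (I / complex_of_real ?S) + cmod (poly_eval w ?p - I / complex_of_real ?S)"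
    by (rule norm_triangle_sub)
  ultimately show ?thesis using D by simp
qed

lemma poly_eval_bound: assumes w: "w \<in> cballN n" and p: "p \<in> poly_ops n" shows "cmod (poly_eval w p) \<le> opnorm n p"
proof -
  obtain F c where F: "finite F" "F \<subseteq> words n" "p = pol n F c" using p unfolding poly_ops_iff by auto
  let ?K = "\<Sum>u\<in>F. cmod (c u) * real (length u)"
  have "(\<lambda>N. opnorm n p + ?K * inverse (real (Suc N))) \<longlonglongrightarrow> opnorm n p + ?K * 0"
    by (intro tendsto_intros LIMSEQ_inverse_real_of_nat)
  moreover have "\<forall>N. cmod (poly_eval w p) \<le> opnorm n p + ?K * inverse (real (Suc N))"
    using poly_eval_bound_approx[OF w F(1,2), of c] F(3) by (simp add: divide_inverse)
  ultimately show ?thesis by (intro LIMSEQ_le_const) auto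
qed

lemma poly_eval_diff_bound: assumes w: "w \<in> cballN n" and p: "p \<in> poly_ops n" and q: "q \<in> poly_ops n"
  shows "cmod (poly_eval w p - poly_eval w q) \<le> opnorm n (lincomb 1 p (-1) q)"
  using poly_eval_bound[OF w poly_lincomb[OF p q, of 1 "-1"]] poly_eval_lincomb[OF p q, of w 1 "-1"] by simp

lemma approx_poly_eval_dist: assumes A: "A \<in> discalg n" "approx n A p" "approx n A q" and w: "w \<in> cballN n"
  shows "cmod (poly_eval w (p m) - poly_eval w (q k)) \<le> opnorm n (lincomb 1 A (-1) (p m)) + opnorm n (lincomb 1 A (-1) (q k))"
proof -
  have pm: "p m \<in> poly_ops n" and qk: "q k \<in> poly_ops n" using A approx_poly by auto
  have bA: "bop n A" using discalg_bop A by auto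
  have e: "lincomb 1 (p m) (-1) (q k) = lincomb (-1) (lincomb 1 A (-1) (p m)) 1 (lincomb 1 A (-1) (q k))"
    unfolding lincomb_def by auto
  have "opnorm n (lincomb 1 (p m) (-1) (q k)) \<le> cmod (-1) * opnorm n (lincomb 1 A (-1) (p m)) + cmod 1 * opnorm n (lincomb 1 A (-1) (q k))"
    unfolding e by (intro opnorm_lincomb bop_lincomb bA bop_poly pm qk)
  thus ?thesis using poly_eval_diff_bound[OF w pm qk] by simp
qed

lemma approx_convergent: assumes A: "A \<in> discalg n" "approx n A p" and w: "w \<in> cballN n"
  shows "convergent (\<lambda>m. poly_eval w (p m))"
proof -
  let ?x = "\<lambda>m. opnorm n (lincomb 1 A (-1) (p m))"
  have "Cauchy (\<lambda>m. poly_eval w (p m))"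
  proof (rule metric_CauchyI)
    fix e :: real assume e: "e > 0"
    have "eventually (\<lambda>m. ?x m < e / 2) sequentially"
      using order_tendstoD(2)[OF approx_bound[OF A(2)], of "e/2"] e by simp
    then obtain M where M: "\<And>m. m \<ge> M \<Longrightarrow> ?x m < e / 2" by (auto simp: eventually_sequentially)
    show "\<exists>M. \<forall>m\<ge>M. \<forall>k\<ge>M. dist (poly_eval w (p m)) (poly_eval w (p k)) < e"
    proof (intro exI allI impI)
      fix m k assume mk: "m \<ge> M" "k \<ge> M"
      have "?x m < e/2" "?x k < e/2" using M mk by auto
      hence "?x m + ?x k < e" by simp
      thus "dist (poly_eval w (p m)) (poly_eval w (p k)) < e" using approx_poly_eval_dist[OF A(1,2,2) w, of m k] by (simp add: dist_norm)
    qed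
  qed
  thus ?thesis by (simp add: Cauchy_convergent_iff)
qed

lemma approx_same_lim: assumes A: "A \<in> discalg n" "approx n A p" "approx n A q" and w: "w \<in> cballN n"
  and L: "(\<lambda>m. poly_eval w (p m)) \<longlonglongrightarrow> L"
  shows "(\<lambda>m. poly_eval w (q m)) \<longlonglongrightarrow> L"
proof -
  have "(\<lambda>m. poly_eval w (q m) - poly_eval w (p m)) \<longlonglongrightarrow> 0"
  proof (rule tendsto_norm_zero_cancel)
    show "(\<lambda>m. norm (poly_eval w (q m) - poly_eval w (p m))) \<longlonglongrightarrow> 0"
    proof (rule LIMSEQ_zero_squeeze)
      fix m show "0 \<le> norm (poly_eval w (q m) - poly_eval w (p m))" by simp
      show "norm (poly_eval w (q m) - poly_eval w (p m)) \<le> opnorm n (lincomb 1 A (-1) (q m)) + opnorm n (lincomb 1 A (-1) (p m))"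
        using approx_poly_eval_dist[OF A(1,3,2) w] by simp
    next
      show "(\<lambda>m. opnorm n (lincomb 1 A (-1) (q m)) + opnorm n (lincomb 1 A (-1) (p m))) \<longlonglongrightarrow> 0"
        using tendsto_add[OF approx_bound[OF A(3)] approx_bound[OF A(2)]] by simp
    qed
  qed
  from tendsto_add[OF L this] show ?thesis by simp
qed

section \<open>The characters theta_z\<close>

definition chi :: "nat \<Rightarrow> (nat \<Rightarrow> complex) \<Rightarrow> fop \<Rightarrow> complex" where
  "chi n w A = (if A \<in> discalg n then lim (\<lambda>m. poly_eval w ((SOME p. approx n A p) m)) else 0)"

lemma chi_tendsto: assumes A: "A \<in> discalg n" "approx n A p" and w: "w \<in> cballN n"
  shows "(\<lambda>m. poly_eval w (p m)) \<longlonglongrightarrow> chi n w A"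
proof -
  let ?q = "SOME p. approx n A p"
  have q: "approx n A ?q" using A by (metis someI_ex)
  have "(\<lambda>m. poly_eval w (?q m)) \<longlonglongrightarrow> lim (\<lambda>m. poly_eval w (?q m))"
    using approx_convergent[OF A(1) q w] by (simp add: convergent_LIMSEQ_iff)
  hence "(\<lambda>m. poly_eval w (p m)) \<longlonglongrightarrow> lim (\<lambda>m. poly_eval w (?q m))" by (rule approx_same_lim[OF A(1) q A(2) w])
  thus ?thesis unfolding chi_def using A by simp
qed

lemma approx_const: "p \<in> poly_ops n \<Longrightarrow> approx n p (\<lambda>_. p)"
  unfolding approx_def by (simp add: lincomb_self opnorm_zero)

lemma chi_poly: assumes "p \<in> poly_ops n" "w \<in> cballN n" shows "chi n w p = poly_eval w p"
  using chi_tendsto[OF poly_discalg[OF assms(1)] approx_const[OF assms(1)] assms(2)]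
  by (simp add: LIMSEQ_const_iff)

lemma discalg_approx: "A \<in> discalg n \<Longrightarrow> \<exists>p. approx n A p"
  using discalg_iff by auto

lemma chi_lincomb: assumes A: "A \<in> discalg n" and B: "B \<in> discalg n" and w: "w \<in> cballN n"
  shows "chi n w (lincomb a A b B) = a * chi n w A + b * chi n w B"
proof -
  obtain p q where p: "approx n A p" and q: "approx n B q" using discalg_approx A B by blast
  have "(\<lambda>m. poly_eval w (lincomb a (p m) b (q m))) \<longlonglongrightarrow> chi n w (lincomb a A b B)"
    by (rule chi_tendsto[OF discalg_lincomb[OF A B] approx_lincomb[OF A p B q] w])
  moreover have "(\<lambda>m. poly_eval w (lincomb a (p m) b (q m))) = (\<lambda>m. a * poly_eval w (p m) + b * poly_eval w (q m))"
    using poly_eval_lincomb approx_poly p q by blast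
  moreover have "(\<lambda>m. a * poly_eval w (p m) + b * poly_eval w (q m)) \<longlonglongrightarrow> a * chi n w A + b * chi n w B"
    by (intro tendsto_intros chi_tendsto A B p q w)
  ultimately show ?thesis using LIMSEQ_unique by metis
qed

lemma chi_comp: assumes A: "A \<in> discalg n" and B: "B \<in> discalg n" and w: "w \<in> cballN n"
  shows "chi n w (A \<circ> B) = chi n w A * chi n w B"
proof -
  obtain p q where p: "approx n A p" and q: "approx n B q" using discalg_approx A B by blast
  have "(\<lambda>m. poly_eval w (p m \<circ> q m)) \<longlonglongrightarrow> chi n w (A \<circ> B)"
    by (rule chi_tendsto[OF discalg_comp[OF A B] approx_comp[OF A p B q] w])
  moreover have "(\<lambda>m. poly_eval w (p m \<circ> q m)) = (\<lambda>m. poly_eval w (p m) * poly_eval w (q m))"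
    using poly_eval_comp approx_poly p q by blast
  moreover have "(\<lambda>m. poly_eval w (p m) * poly_eval w (q m)) \<longlonglongrightarrow> chi n w A * chi n w B"
    by (intro tendsto_intros chi_tendsto A B p q w)
  ultimately show ?thesis using LIMSEQ_unique by metis
qed

lemma chi_is_char: assumes w: "w \<in> cballN n" shows "is_char n (chi n w)"
proof -
  have 1: "chi n w (IdF n) = 1"
    using chi_poly[OF IdF_poly w] poly_eval_Sword[of "[]" n w] by (simp add: Sword_Nil word_pow_def)
  have 2: "\<forall>A. A \<notin> discalg n \<longrightarrow> chi n w A = 0" unfolding chi_def by simp
  have 3: "\<forall>A\<in>discalg n. \<forall>B\<in>discalg n. chi n w (A \<circ> B) = chi n w A * chi n w B \<and>
        (\<forall>a b. chi n w (lincomb a A b B) = a * chi n w A + b * chi n w B)"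
    using chi_comp chi_lincomb w by blast
  show ?thesis unfolding is_char_def using 1 2 3 by blast
qed

lemma chi_Sop: assumes w: "w \<in> cballN n" and i: "i < n" shows "chi n w (Sop n i) = w i"
  using chi_poly[OF Sop_poly[OF i] w] poly_eval_Sword[of "[i]" n w] i by (simp add: Sop_Sword word_pow_def words_Cons)

section \<open>Automatic contractivity of characters\<close>

lemma l2_sum_le: assumes "\<And>m. h m \<in> fock n" "finite F"
  shows "l2 F (\<lambda>x. \<Sum>m<(N::nat). h m x) \<le> (\<Sum>m<N. fnorm (h m))"
proof (induction N)
  case 0 thus ?case by simp
next
  case (Suc N)
  have "l2 F (\<lambda>x. \<Sum>m<Suc N. h m x) = l2 F (\<lambda>x. 1 * (\<Sum>m<N. h m x) + 1 * h N x)" by simp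
  also have "\<dots> \<le> cmod 1 * l2 F (\<lambda>x. \<Sum>m<N. h m x) + cmod 1 * l2 F (h N)" by (rule l2_lin)
  also have "\<dots> \<le> (\<Sum>m<N. fnorm (h m)) + fnorm (h N)"
    using Suc l2_le_fnorm[OF fock_bdd[OF assms(1)] assms(2)] by (simp add: add_mono)
  finally show ?case by simp
qed

lemma series_fock:
  assumes h: "\<And>m. h m \<in> fock n" and a: "\<And>m. fnorm (h m) \<le> a m" and sa: "summable a"
  shows "\<And>x. summable (\<lambda>m. h m x)" "(\<lambda>x. \<Sum>m. h m x) \<in> fock n" "fnorm (\<lambda>x. \<Sum>m. h m x) \<le> suminf a"
proof -
  have a0: "0 \<le> a m" for m using a[of m] fnorm_nonneg[OF fock_bdd[OF h]] by (meson order_trans)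
  show sx: "summable (\<lambda>m. h m x)" for x
    by (rule summable_comparison_test'[OF sa]) (use cmod_le_fnorm[OF fock_bdd[OF h]] a in \<open>meson order_trans\<close>)
  have *: "l2 F (\<lambda>x. \<Sum>m. h m x) \<le> suminf a" if F: "finite F" for F
  proof (rule LIMSEQ_le_const2)
    show "(\<lambda>N. l2 F (\<lambda>x. \<Sum>m<N. h m x)) \<longlonglongrightarrow> l2 F (\<lambda>x. \<Sum>m. h m x)"
      unfolding L2_set_def by (intro tendsto_intros summable_LIMSEQ sx)
    show "\<exists>N. \<forall>k\<ge>N. l2 F (\<lambda>x. \<Sum>m<k. h m x) \<le> suminf a"
    proof (intro exI allI impI)
      fix k :: nat
      have "l2 F (\<lambda>x. \<Sum>m<k. h m x) \<le> (\<Sum>m<k. fnorm (h m))" by (rule l2_sum_le[OF h F])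
      also have "\<dots> \<le> (\<Sum>m<k. a m)" by (intro sum_mono a)
      also have "\<dots> \<le> suminf a" by (rule sum_le_suminf[OF sa]) (use a0 in auto)
      finally show "l2 F (\<lambda>x. \<Sum>m<k. h m x) \<le> suminf a" .
    qed
  qed
  show "fnorm (\<lambda>x. \<Sum>m. h m x) \<le> suminf a" using fnorm_leI(2)[OF *] .
  have "(\<Sum>m. h m x) = 0" if "x \<notin> words n" for x using fock_vanish[OF h that] by simp
  thus "(\<lambda>x. \<Sum>m. h m x) \<in> fock n" using fnorm_leI(1)[OF *] unfolding fock_def by auto
qed

primrec oppow :: "nat \<Rightarrow> fop \<Rightarrow> nat \<Rightarrow> fop" where
  "oppow n B 0 = IdF n"
| "oppow n B (Suc m) = B \<circ> oppow n B m"

lemma IdF_fock: "f \<in> fock n \<Longrightarrow> IdF n f = f" unfolding IdF_def by simp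

lemma bop_IdF: "bop n (IdF n)" using bop_poly IdF_poly by auto

lemma opnorm_IdF: "opnorm n (IdF n) \<le> 1"
  by (rule opnorm_leI) (auto simp: IdF_fock)

lemma oppow_discalg: "B \<in> discalg n \<Longrightarrow> oppow n B m \<in> discalg n"
  by (induction m) (auto intro: IdF_discalg discalg_comp)

lemma bop_oppow: "B \<in> discalg n \<Longrightarrow> bop n (oppow n B m)"
  using oppow_discalg discalg_bop by auto

lemma opnorm_oppow: assumes "B \<in> discalg n" shows "opnorm n (oppow n B m) \<le> (opnorm n B)^m"
proof (induction m)
  case 0 thus ?case using opnorm_IdF by simp
next
  case (Suc m)
  have "opnorm n (B \<circ> oppow n B m) \<le> opnorm n B * opnorm n (oppow n B m)"
    by (rule opnorm_comp[OF discalg_bop[OF assms] bop_oppow[OF assms]])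
  also have "\<dots> \<le> opnorm n B * (opnorm n B)^m"
    by (rule mult_left_mono[OF Suc opnorm_nonneg[OF discalg_bop[OF assms]]])
  finally have "opnorm n (B \<circ> oppow n B m) \<le> (opnorm n B)^(Suc m)" by simp
  thus ?case by (simp only: oppow.simps)
qed

lemma fnorm_oppow: assumes "B \<in> discalg n" "f \<in> fock n" shows "fnorm (oppow n B m f) \<le> (opnorm n B)^m * fnorm f"
proof -
  have "fnorm (oppow n B m f) \<le> opnorm n (oppow n B m) * fnorm f" by (rule opnorm_le[OF bop_oppow[OF assms(1)] assms(2)])
  also have "\<dots> \<le> (opnorm n B)^m * fnorm f"
    by (rule mult_right_mono[OF opnorm_oppow[OF assms(1)] fnorm_nonneg[OF fock_bdd[OF assms(2)]]])
  finally show ?thesis .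
qed

lemma oppow_fock: "B \<in> discalg n \<Longrightarrow> f \<in> fock n \<Longrightarrow> oppow n B m f \<in> fock n"
  using bop_fock bop_oppow by blast

definition neumann :: "nat \<Rightarrow> fop \<Rightarrow> fop" where
  "neumann n B = (\<lambda>f x. \<Sum>m. oppow n B m f x)"

definition neumann_partial :: "nat \<Rightarrow> fop \<Rightarrow> nat \<Rightarrow> fop" where
  "neumann_partial n B N = (\<lambda>f x. \<Sum>m<N. oppow n B m f x)"

lemma fock_sum1: "finite S \<Longrightarrow> (\<And>m. m \<in> S \<Longrightarrow> g m \<in> fock n) \<Longrightarrow> (\<lambda>x. \<Sum>m\<in>S. g m x) \<in> fock n"
  using fock_sum[of S g n "\<lambda>_. 1"] by simp

lemma bop_sum: assumes T: "bop n T" and S: "finite S" and g: "\<And>m. m \<in> S \<Longrightarrow> g m \<in> fock n"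
  shows "T (\<lambda>x. \<Sum>m\<in>S. g m x) = (\<lambda>x. \<Sum>m\<in>S. T (g m) x)"
  using S g
proof (induction S rule: finite_induct)
  case empty thus ?case using bop_zero[OF T] by simp
next
  case (insert a S)
  have ps: "(\<lambda>x. \<Sum>m\<in>S. g m x) \<in> fock n" using fock_sum1 insert by auto
  have ga: "g a \<in> fock n" using insert by auto
  have "(\<lambda>x. \<Sum>m\<in>insert a S. g m x) = (\<lambda>x. 1 * g a x + 1 * (\<Sum>m\<in>S. g m x))" using insert by simp
  hence "T (\<lambda>x. \<Sum>m\<in>insert a S. g m x) = (\<lambda>x. 1 * T (g a) x + 1 * T (\<lambda>x. \<Sum>m\<in>S. g m x) x)"
    using bop_lin[OF T ga ps, where a=1 and b=1] by simp
  also have "\<dots> = (\<lambda>x. \<Sum>m\<in>insert a S. T (g m) x)" using insert by simp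
  finally show ?case .
qed

locale small_op =
  fixes n B
  assumes B: "B \<in> discalg n" and q1: "opnorm n B < 1"
begin

abbreviation "q \<equiv> opnorm n B"

lemma q0: "0 \<le> q" using opnorm_nonneg[OF discalg_bop[OF B]] .

lemma geometric_tail: "summable (\<lambda>m. q^(m + N) * c)" "(\<Sum>m. q^(m + N) * c) = q^N * c / (1 - q)"
proof -
  have "summable (\<lambda>m. q^m)" using q0 q1 by (intro summable_geometric) simp
  hence s: "summable (\<lambda>m. q^m * (q^N * c))" by (rule summable_mult2)
  thus "summable (\<lambda>m. q^(m + N) * c)" by (simp add: power_add algebra_simps)
  have "(\<Sum>m. q^m * (q^N * c)) = (\<Sum>m. q^m) * (q^N * c)" by (rule suminf_mult2[symmetric]) (use q0 q1 in \<open>intro summable_geometric; simp\<close>)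
  also have "\<dots> = q^N * c / (1 - q)" using q0 q1 by (simp add: suminf_geometric)
  finally show "(\<Sum>m. q^(m + N) * c) = q^N * c / (1 - q)" by (simp add: power_add algebra_simps)
qed

lemma neumann_tail_series: assumes f: "f \<in> fock n"
  shows "\<And>x. summable (\<lambda>m. oppow n B (m + N) f x)" "(\<lambda>x. \<Sum>m. oppow n B (m + N) f x) \<in> fock n"
    "fnorm (\<lambda>x. \<Sum>m. oppow n B (m + N) f x) \<le> q^N * fnorm f / (1 - q)"
proof -
  have h: "\<And>m. oppow n B (m + N) f \<in> fock n" using oppow_fock[OF B f] .
  have a: "\<And>m. fnorm (oppow n B (m + N) f) \<le> q^(m + N) * fnorm f" using fnorm_oppow[OF B f] .
  note S = series_fock[OF h a geometric_tail(1)]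
  show "\<And>x. summable (\<lambda>m. oppow n B (m + N) f x)" using S(1) .
  show "(\<lambda>x. \<Sum>m. oppow n B (m + N) f x) \<in> fock n" using S(2) .
  show "fnorm (\<lambda>x. \<Sum>m. oppow n B (m + N) f x) \<le> q^N * fnorm f / (1 - q)" using S(3) geometric_tail(2) by simp
qed

lemma neumann_fock: "f \<in> fock n \<Longrightarrow> neumann n B f \<in> fock n \<and> fnorm (neumann n B f) \<le> fnorm f / (1 - q)"
  using neumann_tail_series[of f 0] unfolding neumann_def by simp

lemma neumann_out: "f \<notin> fock n \<Longrightarrow> neumann n B f = 0"
  unfolding neumann_def using bop_out[OF bop_oppow[OF B]] by (simp add: zero_fun_def)

lemma neumann_minus_partial: assumes f: "f \<in> fock n"
  shows "(\<lambda>x. neumann n B f x - neumann_partial n B N f x) = (\<lambda>x. \<Sum>m. oppow n B (m + N) f x)"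
proof (rule ext)
  fix x
  have "summable (\<lambda>m. oppow n B m f x)" using neumann_tail_series(1)[OF f, of 0 x] by simp
  from suminf_split_initial_segment[OF this, of N]
  show "neumann n B f x - neumann_partial n B N f x = (\<Sum>m. oppow n B (m + N) f x)" unfolding neumann_def neumann_partial_def by simp
qed

lemma bop_neumann: "bop n (neumann n B)"
  unfolding bop_def
proof (intro conjI ballI allI impI)
  show "neumann n B ` fock n \<subseteq> fock n" using neumann_fock by auto
  show "neumann n B f = 0" if "f \<notin> fock n" for f using neumann_out[OF that] .
  show "neumann n B (\<lambda>w. a * f w + b * g w) = (\<lambda>w. a * neumann n B f w + b * neumann n B g w)"
    if f: "f \<in> fock n" and g: "g \<in> fock n" for f g a b
  proof (rule ext)
    fix x
    have sf: "summable (\<lambda>m. oppow n B m f x)" and sg: "summable (\<lambda>m. oppow n B m g x)"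
      using neumann_tail_series(1)[OF f, of 0 x] neumann_tail_series(1)[OF g, of 0 x] by auto
    have "neumann n B (\<lambda>w. a * f w + b * g w) x = (\<Sum>m. a * oppow n B m f x + b * oppow n B m g x)"
      unfolding neumann_def using bop_lin[OF bop_oppow[OF B] f g] by simp
    also have "\<dots> = a * (\<Sum>m. oppow n B m f x) + b * (\<Sum>m. oppow n B m g x)"
      using suminf_add[OF summable_mult[OF sf] summable_mult[OF sg]] suminf_mult[OF sf] suminf_mult[OF sg] by simp
    finally show "neumann n B (\<lambda>w. a * f w + b * g w) x = a * neumann n B f x + b * neumann n B g x" unfolding neumann_def .
  qed
  show "\<exists>C. \<forall>f\<in>fock n. fnorm (neumann n B f) \<le> C * fnorm f"
    using neumann_fock by (intro exI[of _ "1 / (1 - q)"]) auto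
qed

lemma neumann_partial_discalg: "neumann_partial n B N \<in> discalg n"
proof (induction N)
  case 0
  have "neumann_partial n B 0 = (\<lambda>f. 0)" unfolding neumann_partial_def by (auto simp: zero_fun_def)
  thus ?case using zero_discalg[of n] by metis
next
  case (Suc N)
  have "neumann_partial n B (Suc N) = lincomb 1 (neumann_partial n B N) 1 (oppow n B N)" unfolding neumann_partial_def lincomb_def by simp
  thus ?case using discalg_lincomb[OF Suc oppow_discalg[OF B]] by simp
qed

lemma opnorm_neumann_minus_partial: "opnorm n (lincomb 1 (neumann n B) (-1) (neumann_partial n B N)) \<le> q^N / (1 - q)"
proof (rule opnorm_leI[OF _ divide_nonneg_pos[OF zero_le_power[OF q0]]])
  fix f assume f: "f \<in> fock n"
  have "lincomb 1 (neumann n B) (-1) (neumann_partial n B N) f = (\<lambda>x. neumann n B f x - neumann_partial n B N f x)"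
    unfolding lincomb_def by simp
  also have "\<dots> = (\<lambda>x. \<Sum>m. oppow n B (m + N) f x)" by (rule neumann_minus_partial[OF f])
  finally show "fnorm (lincomb 1 (neumann n B) (-1) (neumann_partial n B N) f) \<le> q^N / (1 - q) * fnorm f"
    using neumann_tail_series(3)[OF f, of N] by simp
qed (use q1 in simp)

lemma neumann_discalg: "neumann n B \<in> discalg n"
  unfolding discalg_iff_lincomb
proof (intro conjI allI impI bop_neumann)
  fix e :: real assume e: "e > 0"
  have "(\<lambda>N. q^N / (1 - q)) \<longlonglongrightarrow> 0 / (1 - q)"
    using q0 q1 by (intro tendsto_intros LIMSEQ_power_zero) auto
  hence "eventually (\<lambda>N. q^N / (1 - q) < e / 2) sequentially"
    using e by (intro order_tendstoD(2)) auto
  then obtain N where N: "q^N / (1 - q) < e / 2" by (auto dest: eventually_happens)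
  obtain p where p: "p \<in> poly_ops n" "opnorm n (lincomb 1 (neumann_partial n B N) (-1) p) < e / 2"
    using neumann_partial_discalg[of N] e unfolding discalg_iff_lincomb by (meson half_gt_zero)
  have bP: "bop n (neumann_partial n B N)" using discalg_bop[OF neumann_partial_discalg] .
  have eq: "lincomb 1 (neumann n B) (-1) p = lincomb 1 (lincomb 1 (neumann n B) (-1) (neumann_partial n B N)) 1 (lincomb 1 (neumann_partial n B N) (-1) p)"
    unfolding lincomb_def by auto
  have "opnorm n (lincomb 1 (neumann n B) (-1) p) \<le> cmod 1 * opnorm n (lincomb 1 (neumann n B) (-1) (neumann_partial n B N)) + cmod 1 * opnorm n (lincomb 1 (neumann_partial n B N) (-1) p)"
    unfolding eq by (intro opnorm_lincomb bop_lincomb bop_neumann bP bop_poly p(1))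
  also have "\<dots> < e" using opnorm_neumann_minus_partial[of N] N p(2) by (simp only: norm_one mult_1_left)
  finally show "\<exists>p\<in>poly_ops n. opnorm n (lincomb 1 (neumann n B) (-1) p) < e" using p(1) by blast
qed

lemma neumann_partial_fock: "f \<in> fock n \<Longrightarrow> neumann_partial n B N f \<in> fock n"
  unfolding neumann_partial_def by (rule fock_sum1) (auto intro: oppow_fock[OF B])

lemma apply_neumann_partial_dist:
  assumes f: "f \<in> fock n"
  shows "cmod (B (neumann n B f) x - (\<Sum>m<N. oppow n B (Suc m) f x)) \<le> q * (q^N * fnorm f / (1 - q))"
proof -
  let ?g = "neumann n B f" and ?tail = "\<lambda>y. \<Sum>m. oppow n B (m + N) f y"
  have bB: "bop n B" using discalg_bop[OF B] .
  have tail: "?tail \<in> fock n" using neumann_tail_series(2)[OF f] .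
  have "B (neumann_partial n B N f) = (\<lambda>x. \<Sum>m<N. B (oppow n B m f) x)"
    unfolding neumann_partial_def by (rule bop_sum[OF bB]) (auto intro: oppow_fock[OF B f])
  hence BP: "B (neumann_partial n B N f) x = (\<Sum>m<N. oppow n B (Suc m) f x)" by simp
  have "B (\<lambda>y. 1 * ?g y + (-1) * neumann_partial n B N f y) = (\<lambda>y. 1 * B ?g y + (-1) * B (neumann_partial n B N f) y)"
    using neumann_fock[OF f] by (intro bop_lin[OF bB _ neumann_partial_fock[OF f]]) auto
  moreover have "(\<lambda>y. 1 * ?g y + (-1) * neumann_partial n B N f y) = ?tail"
    using neumann_minus_partial[OF f, of N] by simp
  ultimately have diff: "B ?g x - (\<Sum>m<N. oppow n B (Suc m) f x) = B ?tail x"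
    using BP by (metis (no_types, lifting) add_uminus_conv_diff mult_1 mult_minus1)
  have "cmod (B ?tail x) \<le> fnorm (B ?tail)"
    by (rule cmod_le_fnorm[OF fock_bdd[OF bop_fock[OF bB tail]]])
  also have "\<dots> \<le> q * fnorm ?tail" by (rule opnorm_le[OF bB tail])
  also have "\<dots> \<le> q * (q^N * fnorm f / (1 - q))" by (rule mult_left_mono[OF neumann_tail_series(3)[OF f] q0])
  finally show ?thesis unfolding diff .
qed

lemma apply_neumann: assumes f: "f \<in> fock n" shows "B (neumann n B f) = (\<lambda>x. neumann n B f x - f x)"
proof (rule ext)
  fix x
  let ?g = "neumann n B f"
  have "(\<lambda>N. q * (q^N * fnorm f / (1 - q))) \<longlonglongrightarrow> q * (0 * fnorm f / (1 - q))"
    using q0 q1 by (intro tendsto_intros LIMSEQ_power_zero) auto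
  hence "(\<lambda>N. cmod (B ?g x - (\<Sum>m<N. oppow n B (Suc m) f x))) \<longlonglongrightarrow> 0"
    by (intro LIMSEQ_zero_squeeze[OF norm_ge_zero apply_neumann_partial_dist[OF f]]) simp
  hence "(\<lambda>N. B ?g x - (\<Sum>m<N. oppow n B (Suc m) f x)) \<longlonglongrightarrow> 0"
    by (rule tendsto_norm_zero_cancel)
  from tendsto_diff[OF tendsto_const[of "B ?g x"] this]
  have lim: "(\<lambda>N. \<Sum>m<N. oppow n B (Suc m) f x) \<longlonglongrightarrow> B ?g x" by simp
  have "summable (\<lambda>m. oppow n B (Suc m) f x)" using neumann_tail_series(1)[OF f, of 1] by simp
  hence "B ?g x = (\<Sum>m. oppow n B (Suc m) f x)" using LIMSEQ_unique[OF lim summable_LIMSEQ] by blast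
  also have "\<dots> = ?g x - oppow n B 0 f x"
    unfolding neumann_def by (rule suminf_split_head) (use neumann_tail_series(1)[OF f, of 0] in simp)
  also have "\<dots> = ?g x - f x" using IdF_fock[OF f] by simp
  finally show "B ?g x = ?g x - f x" .
qed

lemma neumann_right_inverse: "lincomb 1 (IdF n) (-1) B \<circ> neumann n B = IdF n"
proof (rule ext)
  fix f
  show "(lincomb 1 (IdF n) (-1) B \<circ> neumann n B) f = IdF n f"
  proof (cases "f \<in> fock n")
    case True
    have gf: "neumann n B f \<in> fock n" using neumann_fock[OF True] by auto
    show ?thesis using apply_neumann[OF True] IdF_fock[OF gf] IdF_fock[OF True] by (simp add: lincomb_app)
  next
    case False
    thus ?thesis using neumann_out[OF False] bop_zero'[OF discalg_bop[OF B]] bop_zero'[OF bop_IdF]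
      by (simp add: lincomb_app IdF_def zero_fun_def)
  qed
qed

lemma char_neq_1: assumes c: "is_char n \<chi>" shows "\<chi> B \<noteq> 1"
proof
  assume B1: "\<chi> B = 1"
  have IB: "lincomb 1 (IdF n) (-1) B \<in> discalg n" by (rule discalg_lincomb[OF IdF_discalg B])
  have "1 = \<chi> (IdF n)" using c unfolding is_char_def by simp
  also have "\<dots> = \<chi> (lincomb 1 (IdF n) (-1) B \<circ> neumann n B)" using neumann_right_inverse by simp
  also have "\<dots> = \<chi> (lincomb 1 (IdF n) (-1) B) * \<chi> (neumann n B)" using c IB neumann_discalg unfolding is_char_def by blast
  also have "\<chi> (lincomb 1 (IdF n) (-1) B) = 1 * \<chi> (IdF n) + (-1) * \<chi> B" using c IdF_discalg B unfolding is_char_def by blast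
  also have "\<dots> = 0" using B1 c unfolding is_char_def by simp
  finally show False by simp
qed

end

lemma char_bound: assumes c: "is_char n \<chi>" and R: "R \<in> discalg n" shows "cmod (\<chi> R) \<le> opnorm n R"
proof (rule ccontr)
  assume "\<not> cmod (\<chi> R) \<le> opnorm n R"
  hence lt: "opnorm n R < cmod (\<chi> R)" by simp
  have R0: "0 \<le> opnorm n R" using opnorm_nonneg[OF discalg_bop[OF R]] .
  hence l0: "\<chi> R \<noteq> 0" using lt by auto
  let ?B = "lincomb (1 / \<chi> R) R 0 R"
  have Bd: "?B \<in> discalg n" by (rule discalg_lincomb[OF R R])
  have "\<chi> ?B = (1 / \<chi> R) * \<chi> R + 0 * \<chi> R" using c R unfolding is_char_def by blast
  hence B1: "\<chi> ?B = 1" using l0 by simp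
  have "opnorm n ?B \<le> cmod (1 / \<chi> R) * opnorm n R + cmod 0 * opnorm n R"
    by (rule opnorm_lincomb[OF discalg_bop[OF R] discalg_bop[OF R]])
  also have "\<dots> = opnorm n R / cmod (\<chi> R)" by (simp add: norm_divide)
  also have "\<dots> < 1" using lt l0 by simp
  finally have "small_op n ?B" using Bd by unfold_locales
  from small_op.char_neq_1[OF this c] B1 show False by simp
qed

lemma char_Sword: assumes c: "is_char n \<chi>" and S: "\<forall>i<n. \<chi> (Sop n i) = w i"
  shows "u \<in> words n \<Longrightarrow> \<chi> (Sword n u) = word_pow w u"
proof (induction u)
  case Nil thus ?case using c by (simp add: Sword_Nil word_pow_def is_char_def)
next
  case (Cons i u)
  hence i: "i < n" and u: "u \<in> words n" using words_Cons by auto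
  have "\<chi> (Sword n (i # u)) = \<chi> (Sop n i \<circ> Sword n u)" by (simp add: Sword_Cons)
  also have "\<dots> = \<chi> (Sop n i) * \<chi> (Sword n u)"
    using c Sop_discalg[OF i] Sword_discalg[OF u] unfolding is_char_def by blast
  also have "\<dots> = word_pow w (i # u)" using S i Cons.IH[OF u] by (simp add: word_pow_def)
  finally show ?case .
qed

lemma char_pol: assumes c: "is_char n \<chi>" and S: "\<forall>i<n. \<chi> (Sop n i) = w i"
  shows "finite F \<Longrightarrow> F \<subseteq> words n \<Longrightarrow> \<chi> (pol n F c) = (\<Sum>u\<in>F. c u * word_pow w u)"
proof (induction F rule: finite_induct)
  case empty
  have "pol n {} c = lincomb 0 (IdF n) 0 (IdF n)" unfolding pol_def lincomb_def by simp
  hence "\<chi> (pol n {} c) = 0 * \<chi> (IdF n) + 0 * \<chi> (IdF n)" using c IdF_discalg unfolding is_char_def by metis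
  thus ?case by simp
next
  case (insert u F)
  have u: "u \<in> words n" and F: "F \<subseteq> words n" using insert by auto
  have "pol n (insert u F) c = lincomb 1 (pol n F c) (c u) (Sword n u)"
    unfolding pol_def lincomb_def using insert by (simp add: add.commute)
  hence "\<chi> (pol n (insert u F) c) = 1 * \<chi> (pol n F c) + c u * \<chi> (Sword n u)"
    using c poly_discalg[OF pol_in[OF insert(1) F]] Sword_discalg[OF u] unfolding is_char_def by metis
  thus ?case using insert char_Sword[OF c S u] by (simp add: add.commute)
qed

lemma char_poly: assumes c: "is_char n \<chi>" and S: "\<forall>i<n. \<chi> (Sop n i) = w i" and p: "p \<in> poly_ops n"
  shows "\<chi> p = poly_eval w p"
proof -
  obtain F d where F: "finite F" "F \<subseteq> words n" "p = pol n F d" using p unfolding poly_ops_iff by auto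
  show ?thesis using char_pol[OF c S F(1,2)] poly_eval_pol[OF F(1,2)] F(3) by simp
qed

lemma char_unique: assumes c: "is_char n \<chi>" and S: "\<forall>i<n. \<chi> (Sop n i) = w i" and w: "w \<in> cballN n"
  shows "\<chi> = chi n w"
proof (rule ext)
  fix A
  have c2: "is_char n (chi n w)" using chi_is_char[OF w] .
  have S2: "\<forall>i<n. chi n w (Sop n i) = w i" using chi_Sop[OF w] by auto
  show "\<chi> A = chi n w A"
  proof (cases "A \<in> discalg n")
    case False thus ?thesis using c c2 unfolding is_char_def by auto
  next
    case True
    have EE: "cmod (\<chi> A - chi n w A) \<le> 2 * e" if e: "e > 0" for e
    proof -
      obtain p where p: "p \<in> poly_ops n" "opnorm n (lincomb 1 A (-1) p) < e"
        using True e unfolding discalg_iff_lincomb by blast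
      have pd: "p \<in> discalg n" using poly_discalg[OF p(1)] .
      have D: "lincomb 1 A (-1) p \<in> discalg n" by (rule discalg_lincomb[OF True pd])
      have "\<chi> (lincomb 1 A (-1) p) = 1 * \<chi> A + (-1) * \<chi> p" using c True pd unfolding is_char_def by blast
      moreover have "chi n w (lincomb 1 A (-1) p) = 1 * chi n w A + (-1) * chi n w p" using c2 True pd unfolding is_char_def by blast
      moreover have "\<chi> p = chi n w p" using char_poly[OF c S p(1)] char_poly[OF c2 S2 p(1)] by simp
      ultimately have eq: "\<chi> A - chi n w A = \<chi> (lincomb 1 A (-1) p) - chi n w (lincomb 1 A (-1) p)" by simp
      have "cmod (\<chi> A - chi n w A) \<le> cmod (\<chi> (lincomb 1 A (-1) p)) + cmod (chi n w (lincomb 1 A (-1) p))"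
        unfolding eq by (rule norm_triangle_ineq4)
      also have "\<dots> \<le> opnorm n (lincomb 1 A (-1) p) + opnorm n (lincomb 1 A (-1) p)"
        by (intro add_mono char_bound[OF c D] char_bound[OF c2 D])
      finally show ?thesis using p(2) by simp
    qed
    have "cmod (\<chi> A - chi n w A) \<le> 0"
    proof (rule field_le_epsilon)
      fix e :: real assume "0 < e"
      hence "cmod (\<chi> A - chi n w A) \<le> 2 * (e / 2)" using EE[of "e/2"] by simp
      thus "cmod (\<chi> A - chi n w A) \<le> 0 + e" by simp
    qed
    thus ?thesis by simp
  qed
qed

lemma theta_eq: assumes w: "w \<in> cballN n" shows "theta n w = chi n w"
  unfolding theta_def
proof (rule the_equality)
  show "is_char n (chi n w) \<and> (\<forall>i<n. chi n w (Sop n i) = w i)" using chi_is_char[OF w] chi_Sop[OF w] by auto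
  fix \<chi> assume "is_char n \<chi> \<and> (\<forall>i<n. \<chi> (Sop n i) = w i)"
  thus "\<chi> = chi n w" using char_unique w by blast
qed

section \<open>The covariance relation in the semicrossed product\<close>

lemma sum_single_support:
  assumes "finite S" "x \<in> S" "\<And>y. y \<in> S \<Longrightarrow> y \<noteq> x \<Longrightarrow> h y = 0"
  shows "sum h S = h x"
  using sum.mono_neutral_right[of S "{x}" h] assms by auto

lemma bop_comp_zero: assumes "bop n T" shows "T \<circ> 0 = 0"
  using bop_zero'[OF assms] by (simp add: fun_eq_iff)

lemma bop_comp_IdF: assumes "bop n T" shows "T \<circ> IdF n = T" "IdF n \<circ> T = T"
  using bop_out[OF assms] bop_zero'[OF assms] bop_fock[OF assms]
  by (auto simp: fun_eq_iff IdF_def)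

lemma aut_discalg: assumes "is_aut n \<phi>" "A \<in> discalg n" shows "\<phi> A \<in> discalg n"
  using assms bij_betwE unfolding is_aut_def by blast

lemma aut_pow_discalg: assumes "is_aut n \<phi>" "A \<in> discalg n" shows "(\<phi> ^^ b) A \<in> discalg n"
  by (induction b) (simp_all add: assms aut_discalg)

lemma aut_zero: assumes "is_aut n \<phi>" shows "\<phi> 0 = 0"
proof -
  have z: "(0::fop) = lincomb 0 (IdF n) 0 (IdF n)" unfolding lincomb_def by (auto simp: zero_fun_def)
  have "\<phi> (lincomb 0 (IdF n) 0 (IdF n)) = lincomb 0 (\<phi> (IdF n)) 0 (\<phi> (IdF n))"
    using assms IdF_discalg unfolding is_aut_def by blast
  also have "\<dots> = 0" unfolding lincomb_def by (auto simp: zero_fun_def)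
  finally show ?thesis using z by simp
qed

definition cp_embed :: "fop \<Rightarrow> nat \<Rightarrow> fop" where
  "cp_embed A = (\<lambda>m. if m = 0 then A else 0)"

lemma cp_embed_cp: "A \<in> discalg n \<Longrightarrow> cp_embed A \<in> cp n"
  unfolding cp_def cp_embed_def by (auto intro: finite_subset[of _ "{0}"])

lemma cpU_cp: "cpU n \<in> cp n"
  unfolding cp_def cpU_def using IdF_discalg by (auto intro: finite_subset[of _ "{1}"])

lemma zero_cp: "(0 :: nat \<Rightarrow> fop) \<in> cp n"
  unfolding cp_def by simp

lemma cpmult_embed_cpU:
  assumes phi: "is_aut n \<phi>" and A: "A \<in> discalg n"
  shows "cpmult \<phi> (cp_embed A) (cpU n) = (\<lambda>m. if m = 1 then \<phi> A else 0)"
proof (rule ext)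
  fix m
  have bop_pow: "bop n ((\<phi> ^^ b) (cp_embed A j))" for b j
    using discalg_bop[OF aut_pow_discalg[OF phi]] A by (simp add: cp_embed_def)
  show "cpmult \<phi> (cp_embed A) (cpU n) m = (if m = 1 then \<phi> A else 0)"
  proof (cases "m = 0")
    case True
    thus ?thesis using bop_comp_zero[OF discalg_bop[OF A]] by (simp add: cpmult_def cpU_def cp_embed_def)
  next
    case False
    have "cpmult \<phi> (cp_embed A) (cpU n) m = \<phi> (cp_embed A (m - 1)) \<circ> IdF n"
      unfolding cpmult_def using False bop_comp_zero[OF bop_pow]
      by (subst sum_single_support[where x=1]) (auto simp: cpU_def)
    also have "\<dots> = (if m = 1 then \<phi> A else 0)"
      using False bop_comp_IdF(1)[OF discalg_bop[OF aut_discalg[OF phi A]]] aut_zero[OF phi]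
      by (auto simp: cp_embed_def fun_eq_iff zero_fun_def)
    finally show ?thesis .
  qed
qed

lemma cpmult_cpU_embed:
  assumes phi: "is_aut n \<phi>" and B: "bop n B"
  shows "cpmult \<phi> (cpU n) (cp_embed B) = (\<lambda>m. if m = 1 then B else 0)"
proof (rule ext)
  fix m
  have "cpmult \<phi> (cpU n) (cp_embed B) m = cpU n m \<circ> B"
    unfolding cpmult_def
    using bop_comp_zero[OF discalg_bop[OF aut_pow_discalg[OF phi]]] IdF_discalg
    by (subst sum_single_support[where x=0]) (auto simp: cp_embed_def cpU_def)
  thus "cpmult \<phi> (cpU n) (cp_embed B) m = (if m = 1 then B else 0)"
    using bop_comp_IdF(2)[OF B] by (auto simp: cpU_def fun_eq_iff)
qed

lemma covariance:
  assumes "is_aut n \<phi>" "A \<in> discalg n"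
  shows "cpmult \<phi> (cp_embed A) (cpU n) = cpmult \<phi> (cpU n) (cp_embed (\<phi> A))"
  using cpmult_embed_cpU[OF assms] cpmult_cpU_embed[OF assms(1) discalg_bop[OF aut_discalg[OF assms]]]
  by simp

section \<open>Nest representations\<close>

lemma nest_rep_uptri: "nest_rep n \<phi> k \<rho> \<Longrightarrow> X \<in> cp n \<Longrightarrow> \<rho> X \<in> uptri k"
  unfolding nest_rep_def by blast

lemma nest_rep_mult:
  "nest_rep n \<phi> k \<rho> \<Longrightarrow> X \<in> cp n \<Longrightarrow> Y \<in> cp n \<Longrightarrow> \<rho> (cpmult \<phi> X Y) = mmult k (\<rho> X) (\<rho> Y)"
  unfolding nest_rep_def by blast

lemma nest_rep_zero: assumes "nest_rep n \<phi> k \<rho>" shows "\<rho> 0 = 0"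
proof -
  have "\<rho> (0 + 0) = \<rho> 0 + \<rho> 0" using assms zero_cp unfolding nest_rep_def by blast
  thus ?thesis by simp
qed

lemma mmult_uptri_entry_left:
  assumes "P \<in> uptri k" "M \<in> uptri k" "i \<le> j" "j < k" "\<And>l. i < l \<Longrightarrow> l \<le> j \<Longrightarrow> M l j = 0"
  shows "mmult k P M i j = P i i * M i j"
  unfolding mmult_def
proof (rule sum_single_support)
  fix l assume "l \<in> {..<k}" "l \<noteq> i"
  thus "P i l * M l j = 0"
    using assms by (cases "l < i"; cases "l \<le> j") (auto simp: uptri_def)
qed (use assms in auto)

lemma mmult_uptri_entry_right:
  assumes "Q \<in> uptri k" "M \<in> uptri k" "i \<le> j" "j < k" "\<And>l. i \<le> l \<Longrightarrow> l < j \<Longrightarrow> M i l = 0"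
  shows "mmult k M Q i j = M i j * Q j j"
  unfolding mmult_def
proof (rule sum_single_support)
  fix l assume "l \<in> {..<k}" "l \<noteq> j"
  thus "M i l * Q l j = 0"
    using assms by (cases "l < i"; cases "l < j") (auto simp: uptri_def)
qed (use assms in auto)

text \<open>Induction on the distance from the diagonal: once M vanishes closer to the diagonal,
  entry (i,j) of the intertwining relation reads (P a i i - Q a j j) * M i j = 0.\<close>

lemma uptri_intertwiner_eq_0:
  fixes M :: cmat and P Q :: "'a \<Rightarrow> cmat"
  assumes M: "M \<in> uptri k" "\<And>i. i < k \<Longrightarrow> M i i = 0"
    and P: "\<And>a. a \<in> S \<Longrightarrow> P a \<in> uptri k" and Q: "\<And>a. a \<in> S \<Longrightarrow> Q a \<in> uptri k"
    and intertwine: "\<And>a. a \<in> S \<Longrightarrow> mmult k (P a) M = mmult k M (Q a)"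
    and separate: "\<And>i j. i < j \<Longrightarrow> j < k \<Longrightarrow> \<exists>a\<in>S. P a i i \<noteq> Q a j j"
  shows "M = (\<lambda>i j. 0)"
proof -
  have upper: "M i j = 0" if "i \<le> j" "j < k" for i j
    using that
  proof (induction "j - i" arbitrary: i j rule: less_induct)
    case less
    show ?case
    proof (cases "i = j")
      case True
      thus ?thesis using M(2) less.prems by simp
    next
      case False
      obtain a where a: "a \<in> S" "P a i i \<noteq> Q a j j"
        using separate[of i j] False less.prems by auto
      have below: "M l j = 0" if "i < l" "l \<le> j" for l
        using less.hyps[of j l] that less.prems by simp
      have left: "M i l = 0" if "i \<le> l" "l < j" for l
        using less.hyps[of l i] that less.prems by simp
      have "P a i i * M i j = mmult k (P a) M i j"
        using mmult_uptri_entry_left[OF P[OF a(1)] M(1) less.prems below] by simp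
      also have "\<dots> = mmult k M (Q a) i j" using intertwine[OF a(1)] by simp
      also have "\<dots> = M i j * Q a j j"
        using mmult_uptri_entry_right[OF Q[OF a(1)] M(1) less.prems left] by simp
      finally have "(P a i i - Q a j j) * M i j = 0" by (simp add: algebra_simps)
      thus ?thesis using a(2) by simp
    qed
  qed
  show ?thesis
  proof (intro ext)
    fix i j
    show "M i j = 0"
    proof (cases "i \<le> j \<and> j < k")
      case True
      thus ?thesis using upper by blast
    next
      case False
      hence "k \<le> j \<or> j < i" by linarith
      thus ?thesis using M(1) unfolding uptri_def by blast
    qed
  qed
qed

lemma ballN_cballN: "z \<in> ballN n \<Longrightarrow> z \<in> cballN n"
  unfolding ballN_def cballN_def by auto

lemma phihat_eqI:
  assumes w: "w \<in> cballN n" and eq: "\<And>A. A \<in> discalg n \<Longrightarrow> theta n w A = theta n z (\<phi> A)"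
  shows "phihat n \<phi> z = w"
proof -
  have theta_w: "theta n w = (\<lambda>A. if A \<in> discalg n then theta n z (\<phi> A) else 0)"
    using eq chi_is_char[OF w] by (auto simp: fun_eq_iff theta_eq[OF w] is_char_def)
  show ?thesis
    unfolding phihat_def
  proof (rule the_equality)
    fix v assume v: "v \<in> cballN n \<and> theta n v = (\<lambda>A. if A \<in> discalg n then theta n z (\<phi> A) else 0)"
    hence same: "chi n v = chi n w" using theta_w theta_eq w by metis
    show "v = w"
    proof (rule ext)
      fix l show "v l = w l"
        using chi_Sop[OF conjunct1[OF v]] chi_Sop[OF w] same v w
        by (cases "l < n") (auto simp: cballN_def)
    qed
  qed (use w theta_w in simp)
qed

theorem lemma4p2:
  fixes n k :: nat and \<phi> :: "fop \<Rightarrow> fop" and Z :: "nat \<Rightarrow> nat \<Rightarrow> complex"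
    and \<rho> :: "(nat \<Rightarrow> fop) \<Rightarrow> cmat"
  assumes "n \<ge> 2"
    and "is_aut n \<phi>"
    and "\<forall>i. Z i \<in> ballN n"
    and "range Z \<inter> range (\<lambda>i. phihat n \<phi> (Z i)) = {}"
    and "\<rho> \<in> NZk n \<phi> Z k"
  shows "\<rho> (cpU n) = (\<lambda>i j. 0)"
proof -
  have rep: "nest_rep n \<phi> k \<rho>"
    and diag: "\<And>i X. i < k \<Longrightarrow> X \<in> cp n \<Longrightarrow> \<rho> X i i = theta n (Z i) (X 0)"
    using assms(5) unfolding NZk_def theta0_def by auto
  show ?thesis
  proof (rule uptri_intertwiner_eq_0[where S = "discalg n"
        and P = "\<lambda>A. \<rho> (cp_embed A)" and Q = "\<lambda>A. \<rho> (cp_embed (\<phi> A))"])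
    show "\<rho> (cpU n) i i = 0" if "i < k" for i
      using diag[OF that cpU_cp] diag[OF that zero_cp] nest_rep_zero[OF rep]
      by (simp add: cpU_def)
    show "mmult k (\<rho> (cp_embed A)) (\<rho> (cpU n)) = mmult k (\<rho> (cpU n)) (\<rho> (cp_embed (\<phi> A)))"
      if "A \<in> discalg n" for A
      using that covariance[OF assms(2) that] nest_rep_mult[OF rep]
        cp_embed_cp aut_discalg[OF assms(2)] cpU_cp by metis
    show "\<exists>A\<in>discalg n. \<rho> (cp_embed A) i i \<noteq> \<rho> (cp_embed (\<phi> A)) j j" if "i < j" "j < k" for i j
    proof (rule ccontr)
      assume "\<not> ?thesis"
      hence "theta n (Z i) A = theta n (Z j) (\<phi> A)" if "A \<in> discalg n" for A
        using that \<open>i < j\<close> \<open>j < k\<close> diag cp_embed_cp aut_discalg[OF assms(2)]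
        by (force simp: cp_embed_def)
      hence "phihat n \<phi> (Z j) = Z i" using phihat_eqI assms(3) ballN_cballN by blast
      thus False using assms(4) by blast
    qed
  qed (use rep nest_rep_uptri cpU_cp cp_embed_cp aut_discalg[OF assms(2)] in blast)+
qed

end
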